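(* $\mathbf{LMO}(\Sigma)\subseteq V_\Sigma(\overline{\mathbf{J}})$.
   Context: A MON-1qfa over a finite alphabet $\Sigma$ is a tuple $A=\langle\Sigma\cup\{\#\},(O_c)_{c\in\Sigma\cup\{\#\}},\pi_0,F\rangle$, where $\pi_0\in\mathbb{C}^{1\times m}$ has norm $1$, each $O_c$ is an observable (Hermitian $m\times m$ matrix) with spectral decomposition $O_c=\sum_{r\in V(O_c)} r\,P_c(r)$ into orthogonal projectors, and $F\subseteq V(O_\#)$. For $x=x_1\cdots x_n$, with $\rho_0=\pi_0^\dagger\pi_0$ and $\rho_i=\sum_{r}P_{x_i}(r)\rho_{i-1}P_{x_i}(r)$, the acceptance probability is $p_A(x)=\sum_{r\in F}\mathrm{tr}(P_\#(r)\rho_n)$. $A$ recognizes $L$ with isolated cut-point $\lambda$ if for all $x\in\Sigma^*$, $x\in L\Leftrightarrow p_A(x)>\lambda$, and there is $\delta>0$ with $|p_A(x)-\lambda|\ge\delta$ for all $x$. $\mathbf{LMO}(\Sigma)$ is the class of languages over $\Sigma$ recognized by some MON-1qfa with isolated cut-point. For a regular language $L$, $M(L)$ is its syntactic monoid and $\phi_L:\Sigma^*\to M(L)$ the syntactic morphism. $\overline{\mathbf{J}}$ is the literal pseudovariety of $J$-trivial syntactic monoids $M(L)$ (i.e. $MxM=MyM\Rightarrow x=y$) whose syntactic morphism satisfies $\phi_L(\sigma)\phi_L(\sigma)=\phi_L(\sigma)$ for all $\sigma\in\Sigma$; $V_\Sigma(\overline{\mathbf{J}})$ is the class of regular languages $L\subseteq\Sigma^*$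 such that $M(L)$ is $J$-trivial and $\phi_L(\sigma)^2=\phi_L(\sigma)$ for every $\sigma\in\Sigma$. *)

theory Defs
  imports Complex_Main "Jordan_Normal_Form.Matrix"
begin

definition ctrans :: "complex mat \<Rightarrow> complex mat" where
  "ctrans A = mat (dim_col A) (dim_row A) (\<lambda>(i,j). cnj (A $$ (j,i)))"

definition mtrace :: "complex mat \<Rightarrow> complex" where
  "mtrace A = (\<Sum>i<dim_row A. A $$ (i,i))"

definition msum :: "nat \<Rightarrow> real set \<Rightarrow> (real \<Rightarrow> complex mat) \<Rightarrow> complex mat" where
  "msum m V f = mat m m (\<lambda>(i,j). \<Sum>r\<in>V. f r $$ (i,j))"

definition hermitian :: "nat \<Rightarrow> complex mat \<Rightarrow> bool" where
  "hermitian m B \<longleftrightarrow> B \<in> carrier_mat m m \<and> ctrans B = B"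

definition orth_projector :: "nat \<Rightarrow> complex mat \<Rightarrow> bool" where
  "orth_projector m P \<longleftrightarrow> P \<in> carrier_mat m m \<and> ctrans P = P \<and> P * P = P"

definition spectral_decomp ::
  "nat \<Rightarrow> complex mat \<Rightarrow> real set \<Rightarrow> (real \<Rightarrow> complex mat) \<Rightarrow> bool" where
  "spectral_decomp m B V P \<longleftrightarrow>
     hermitian m B \<and> finite V \<and>
     (\<forall>r\<in>V. orth_projector m (P r) \<and> P r \<noteq> 0\<^sub>m m m) \<and>
     (\<forall>r\<in>V. \<forall>s\<in>V. r \<noteq> s \<longrightarrow> P r * P s = 0\<^sub>m m m) \<and>
     msum m V P = 1\<^sub>m m \<and>
     B = msum m V (\<lambda>r. complex_of_real r \<cdot>\<^sub>m P r)"

text \<open>A MON-1qfa over the alphabet \<Sigma> (symbols of type 'a); the end-marker # is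
  represented by None, the symbol c \<in> \<Sigma> by Some c.\<close>
record 'a mon1qfa =
  dim  :: nat
  obs  :: "'a option \<Rightarrow> complex mat"
  spec :: "'a option \<Rightarrow> real set"
  proj :: "'a option \<Rightarrow> real \<Rightarrow> complex mat"
  init :: "complex mat"      \<comment> \<open>row vector pi_0, a 1 x m matrix\<close>
  acc  :: "real set"

definition valid_mon1qfa :: "'a set \<Rightarrow> 'a mon1qfa \<Rightarrow> bool" where
  "valid_mon1qfa \<Sigma> A \<longleftrightarrow>
     init A \<in> carrier_mat 1 (dim A) \<and>
     (\<Sum>j<dim A. (cmod (init A $$ (0,j)))\<^sup>2) = 1 \<and>
     (\<forall>c \<in> Some ` \<Sigma> \<union> {None}. spectral_decomp (dim A) (obs A c) (spec A c) (proj A c)) \<and>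
     acc A \<subseteq> spec A None"

definition measure_step :: "'a mon1qfa \<Rightarrow> 'a option \<Rightarrow> complex mat \<Rightarrow> complex mat" where
  "measure_step A c \<rho> = msum (dim A) (spec A c) (\<lambda>r. proj A c r * \<rho> * proj A c r)"

definition rho0 :: "'a mon1qfa \<Rightarrow> complex mat" where
  "rho0 A = ctrans (init A) * init A"

definition rho :: "'a mon1qfa \<Rightarrow> 'a list \<Rightarrow> complex mat" where
  "rho A x = foldl (\<lambda>\<rho> c. measure_step A (Some c) \<rho>) (rho0 A) x"

definition acc_prob :: "'a mon1qfa \<Rightarrow> 'a list \<Rightarrow> real" where
  "acc_prob A x = (\<Sum>r\<in>acc A. Re (mtrace (proj A None r * rho A x)))"

definition recognizes_isolated ::
  "'a set \<Rightarrow> 'a mon1qfa \<Rightarrow> real \<Rightarrow> 'a list set \<Rightarrow> bool" where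
  "recognizes_isolated \<Sigma> A cp L \<longleftrightarrow>
     (\<forall>x\<in>lists \<Sigma>. x \<in> L \<longleftrightarrow> acc_prob A x > cp) \<and>
     (\<exists>\<delta>>0. \<forall>x\<in>lists \<Sigma>. \<bar>acc_prob A x - cp\<bar> \<ge> \<delta>)"

definition LMO :: "'a set \<Rightarrow> 'a list set set" where
  "LMO \<Sigma> = {L. L \<subseteq> lists \<Sigma> \<and>
     (\<exists>A cp. valid_mon1qfa \<Sigma> A \<and> recognizes_isolated \<Sigma> A cp L)}"

definition regular_lang :: "'a set \<Rightarrow> 'a list set \<Rightarrow> bool" where
  "regular_lang \<Sigma> L \<longleftrightarrow>
     (\<exists>(Q :: nat set) q0 (\<delta> :: nat \<Rightarrow> 'a \<Rightarrow> nat) Fin.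
        finite Q \<and> q0 \<in> Q \<and> (\<forall>q\<in>Q. \<forall>a\<in>\<Sigma>. \<delta> q a \<in> Q) \<and> Fin \<subseteq> Q \<and>
        L = {w \<in> lists \<Sigma>. foldl \<delta> q0 w \<in> Fin})"

definition syn_cong :: "'a set \<Rightarrow> 'a list set \<Rightarrow> ('a list \<times> 'a list) set" where
  "syn_cong \<Sigma> L = {(x,y). x \<in> lists \<Sigma> \<and> y \<in> lists \<Sigma> \<and>
      (\<forall>u\<in>lists \<Sigma>. \<forall>v\<in>lists \<Sigma>. u @ x @ v \<in> L \<longleftrightarrow> u @ y @ v \<in> L)}"

text \<open>Syntactic morphism \<phi>_L : \<Sigma>* \<rightarrow> M(L) = \<Sigma>* / syn_cong (word \<mapsto> its class);
  the product of classes is [x][y] = [xy].\<close>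
definition syn_phi :: "'a set \<Rightarrow> 'a list set \<Rightarrow> 'a list \<Rightarrow> 'a list set" where
  "syn_phi \<Sigma> L x = syn_cong \<Sigma> L `` {x}"

definition syn_monoid :: "'a set \<Rightarrow> 'a list set \<Rightarrow> 'a list set set" where
  "syn_monoid \<Sigma> L = lists \<Sigma> // syn_cong \<Sigma> L"

text \<open>The two-sided ideal M \<phi>(x) M = {\<phi>(u)\<phi>(x)\<phi>(v)} = {\<phi>(uxv)}.\<close>
definition syn_ideal :: "'a set \<Rightarrow> 'a list set \<Rightarrow> 'a list \<Rightarrow> 'a list set set" where
  "syn_ideal \<Sigma> L x = {syn_phi \<Sigma> L (u @ x @ v) | u v. u \<in> lists \<Sigma> \<and> v \<in> lists \<Sigma>}"

definition J_trivial_syn :: "'a set \<Rightarrow> 'a list set \<Rightarrow> bool" where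
  "J_trivial_syn \<Sigma> L \<longleftrightarrow>
     (\<forall>x\<in>lists \<Sigma>. \<forall>y\<in>lists \<Sigma>. syn_ideal \<Sigma> L x = syn_ideal \<Sigma> L y \<longrightarrow>
        syn_phi \<Sigma> L x = syn_phi \<Sigma> L y)"

definition V_Jbar :: "'a set \<Rightarrow> 'a list set set" where
  "V_Jbar \<Sigma> = {L. L \<subseteq> lists \<Sigma> \<and> regular_lang \<Sigma> L \<and> J_trivial_syn \<Sigma> L \<and>
      (\<forall>\<sigma>\<in>\<Sigma>. syn_phi \<Sigma> L [\<sigma>, \<sigma>] = syn_phi \<Sigma> L [\<sigma>])}"

end

theory Submission
  imports Defs "HOL-Analysis.L2_Norm"
begin

text \<open>
  The density matrices of a MON-1qfa evolve under pinching maps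
  \<open>\<rho> \<mapsto> \<Sum>\<^sub>r P\<^sub>r \<rho> P\<^sub>r\<close>, which are orthogonal projections for the Hilbert--Schmidt inner
  product.  Hence every letter can only decrease the Hilbert--Schmidt norm of the state, and
  the loss of squared norm caused by a letter \<open>c\<close> is the squared distance by which \<open>c\<close> moves
  the state.  Along
  the states reached by growing powers \<open>s\<^sup>k\<close> the norm is monotone and bounded, so for suitable
  \<open>k\<close> the state is almost fixed by every letter of \<open>s\<close>; by isolation of the cut-point such
  letters can then be inserted or deleted without changing membership.  This yields
  \<open>x \<equiv> y\<close> whenever \<open>x\<close> and \<open>y\<close> are factors of each other, i.e. J-triviality, while
  idempotency of each pinching gives \<open>\<sigma>\<sigma> \<equiv> \<sigma>\<close>.  Regularity follows because the reachable
  states are bounded, so by isolation only finitely many right classes occur.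
\<close>

section \<open>Hilbert--Schmidt geometry of square matrices\<close>

lemma mult_mat_entry:
  assumes "A \<in> carrier_mat m n" "B \<in> carrier_mat n k" "i < m" "j < k"
  shows "(A * B) $$ (i,j) = (\<Sum>l<n. A $$ (i,l) * B $$ (l,j))"
  using assms by (auto simp: scalar_prod_def lessThan_atLeast0 intro!: sum.cong)

lemma ctrans_carrier [simp]: "A \<in> carrier_mat m n \<Longrightarrow> ctrans A \<in> carrier_mat n m"
  by (simp add: ctrans_def)

lemma ctrans_entry:
  "A \<in> carrier_mat m n \<Longrightarrow> i < n \<Longrightarrow> j < m \<Longrightarrow> ctrans A $$ (i,j) = cnj (A $$ (j,i))"
  by (simp add: ctrans_def)

lemma msum_carrier [simp]: "msum m V f \<in> carrier_mat m m"
  by (simp add: msum_def)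

lemma msum_dims [simp]: "dim_row (msum m V f) = m" "dim_col (msum m V f) = m"
  by (simp_all add: msum_def)

lemma msum_cong: "(\<And>r. r \<in> V \<Longrightarrow> f r = g r) \<Longrightarrow> msum m V f = msum m V g"
  by (simp add: msum_def cong: sum.cong)

lemma msum_entry: "i < m \<Longrightarrow> j < m \<Longrightarrow> msum m V f $$ (i,j) = (\<Sum>r\<in>V. f r $$ (i,j))"
  by (simp add: msum_def)

definition entries :: "nat \<Rightarrow> (nat \<times> nat) set" where
  "entries m = {..<m} \<times> {..<m}"

lemma sum_entries: "(\<Sum>p\<in>entries m. f p) = (\<Sum>i<m. \<Sum>j<m. f (i,j))"
  unfolding entries_def by (simp add: sum.cartesian_product)

definition hs_inner :: "nat \<Rightarrow> complex mat \<Rightarrow> complex mat \<Rightarrow> complex" where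
  "hs_inner m A B = (\<Sum>p\<in>entries m. cnj (A $$ p) * B $$ p)"

definition hs_norm :: "nat \<Rightarrow> complex mat \<Rightarrow> real" where
  "hs_norm m A = L2_set (\<lambda>p. cmod (A $$ p)) (entries m)"

lemma hs_norm_nonneg [simp]: "0 \<le> hs_norm m A"
  by (simp add: hs_norm_def)

lemma hs_norm_square: "(hs_norm m A)\<^sup>2 = (\<Sum>p\<in>entries m. (cmod (A $$ p))\<^sup>2)"
  unfolding hs_norm_def L2_set_def by (simp add: sum_nonneg)

lemma entry_norm_le_hs_norm: "i < m \<Longrightarrow> j < m \<Longrightarrow> cmod (A $$ (i,j)) \<le> hs_norm m A"
  unfolding hs_norm_def by (rule member_le_L2_set) (auto simp: entries_def)

lemma hs_norm_diff_self: "B \<in> carrier_mat m m \<Longrightarrow> hs_norm m (B - B) = 0"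
  unfolding hs_norm_def by (rule L2_set_0') (auto simp: entries_def)

lemma hs_norm_minus_commute:
  assumes "A \<in> carrier_mat m m" "B \<in> carrier_mat m m"
  shows "hs_norm m (A - B) = hs_norm m (B - A)"
  unfolding hs_norm_def
  by (rule L2_set_cong) (use assms in \<open>auto simp: entries_def norm_minus_commute\<close>)

lemma hs_norm_triangle:
  assumes "A \<in> carrier_mat m m" "B \<in> carrier_mat m m" "C \<in> carrier_mat m m"
  shows "hs_norm m (A - C) \<le> hs_norm m (A - B) + hs_norm m (B - C)"
proof -
  have "hs_norm m (A - C) \<le> L2_set (\<lambda>p. cmod ((A - B) $$ p) + cmod ((B - C) $$ p)) (entries m)"
    unfolding hs_norm_def
  proof (rule L2_set_mono)
    fix p assume "p \<in> entries m"
    then have "(A - C) $$ p = (A - B) $$ p + (B - C) $$ p"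
      using assms by (auto simp: entries_def)
    then show "cmod ((A - C) $$ p) \<le> cmod ((A - B) $$ p) + cmod ((B - C) $$ p)"
      by (metis norm_triangle_ineq)
  qed simp
  also have "\<dots> \<le> hs_norm m (A - B) + hs_norm m (B - C)"
    unfolding hs_norm_def by (rule L2_set_triangle_ineq)
  finally show ?thesis .
qed

lemma norm_hs_inner_le: "cmod (hs_inner m A B) \<le> hs_norm m A * hs_norm m B"
proof -
  have "cmod (hs_inner m A B) \<le> (\<Sum>p\<in>entries m. cmod (cnj (A $$ p) * B $$ p))"
    unfolding hs_inner_def by (rule norm_sum)
  also have "\<dots> = (\<Sum>p\<in>entries m. \<bar>cmod (A $$ p)\<bar> * \<bar>cmod (B $$ p)\<bar>)"
    by (simp add: norm_mult)
  also have "\<dots> \<le> hs_norm m A * hs_norm m B"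
    unfolding hs_norm_def by (rule L2_set_mult_ineq)
  finally show ?thesis .
qed

lemma hs_inner_diff_right:
  assumes "B \<in> carrier_mat m m" "C \<in> carrier_mat m m"
  shows "hs_inner m A (B - C) = hs_inner m A B - hs_inner m A C"
  unfolding hs_inner_def sum_subtractf[symmetric]
  by (rule sum.cong) (use assms in \<open>auto simp: entries_def algebra_simps\<close>)

lemma hs_inner_diff_left:
  assumes "B \<in> carrier_mat m m" "C \<in> carrier_mat m m"
  shows "hs_inner m (B - C) A = hs_inner m B A - hs_inner m C A"
  unfolding hs_inner_def sum_subtractf[symmetric]
  by (rule sum.cong) (use assms in \<open>auto simp: entries_def algebra_simps\<close>)

lemma abs_Re_hs_inner_diff_right:
  assumes "B \<in> carrier_mat m m" "C \<in> carrier_mat m m"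
  shows "\<bar>Re (hs_inner m A B) - Re (hs_inner m A C)\<bar> \<le> hs_norm m A * hs_norm m (B - C)"
  using abs_Re_le_cmod[of "hs_inner m A (B - C)"] norm_hs_inner_le[of m A "B - C"]
    hs_inner_diff_right[OF assms, of A] by simp

lemma abs_Re_hs_inner_diff_left:
  assumes "B \<in> carrier_mat m m" "C \<in> carrier_mat m m"
  shows "\<bar>Re (hs_inner m B A) - Re (hs_inner m C A)\<bar> \<le> hs_norm m (B - C) * hs_norm m A"
  using abs_Re_le_cmod[of "hs_inner m (B - C) A"] norm_hs_inner_le[of m "B - C" A]
    hs_inner_diff_left[OF assms, of A] by simp

lemma hs_norm_pythagoras:
  assumes B: "B \<in> carrier_mat m m" and C: "C \<in> carrier_mat m m"
    and orth: "hs_inner m C (B - C) = 0"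
  shows "(hs_norm m B)\<^sup>2 = (hs_norm m C)\<^sup>2 + (hs_norm m (C - B))\<^sup>2"
proof -
  have "(hs_norm m B)\<^sup>2 = (\<Sum>p\<in>entries m. (cmod (C $$ p))\<^sup>2 + (cmod ((B - C) $$ p))\<^sup>2
        + 2 * Re (cnj (C $$ p) * (B - C) $$ p))"
    unfolding hs_norm_square
  proof (rule sum.cong)
    fix p assume "p \<in> entries m"
    then have "B $$ p = C $$ p + (B - C) $$ p" using B C by (auto simp: entries_def)
    then show "(cmod (B $$ p))\<^sup>2 = (cmod (C $$ p))\<^sup>2 + (cmod ((B - C) $$ p))\<^sup>2
        + 2 * Re (cnj (C $$ p) * (B - C) $$ p)"
      by (simp only: cmod_power2) (simp add: power2_eq_square algebra_simps)
  qed simp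
  also have "\<dots> = (hs_norm m C)\<^sup>2 + (hs_norm m (B - C))\<^sup>2 + 2 * Re (hs_inner m C (B - C))"
    unfolding hs_norm_square hs_inner_def by (simp add: sum.distrib sum_distrib_left)
  finally show ?thesis using orth hs_norm_minus_commute[OF B C] by simp
qed

lemma hs_inner_mult_left:
  assumes X: "X \<in> carrier_mat m m" and Y: "Y \<in> carrier_mat m m" and Z: "Z \<in> carrier_mat m m"
  shows "hs_inner m (X * Y) Z = hs_inner m Y (ctrans X * Z)"
proof -
  have "hs_inner m (X * Y) Z =
      (\<Sum>i<m. \<Sum>j<m. \<Sum>k<m. cnj (X $$ (i,k)) * cnj (Y $$ (k,j)) * Z $$ (i,j))"
    unfolding hs_inner_def sum_entries
    by (intro sum.cong refl)
      (simp add: mult_mat_entry[OF X Y] sum_distrib_right cnj_sum del: index_mult_mat)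
  also have "\<dots> = (\<Sum>i<m. \<Sum>k<m. \<Sum>j<m. cnj (X $$ (i,k)) * cnj (Y $$ (k,j)) * Z $$ (i,j))"
    by (rule sum.cong[OF refl], rule sum.swap)
  also have "\<dots> = (\<Sum>k<m. \<Sum>i<m. \<Sum>j<m. cnj (X $$ (i,k)) * cnj (Y $$ (k,j)) * Z $$ (i,j))"
    by (rule sum.swap)
  also have "\<dots> = (\<Sum>k<m. \<Sum>j<m. \<Sum>i<m. cnj (X $$ (i,k)) * cnj (Y $$ (k,j)) * Z $$ (i,j))"
    by (rule sum.cong[OF refl], rule sum.swap)
  also have "\<dots> = hs_inner m Y (ctrans X * Z)"
    unfolding hs_inner_def sum_entries
    by (intro sum.cong refl)
      (simp add: mult_mat_entry[OF ctrans_carrier[OF X] Z] ctrans_entry[OF X]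
        sum_distrib_left mult_ac del: index_mult_mat)
  finally show ?thesis .
qed

lemma hs_inner_mult_right:
  assumes X: "X \<in> carrier_mat m m" and Y: "Y \<in> carrier_mat m m" and Z: "Z \<in> carrier_mat m m"
  shows "hs_inner m (Y * X) Z = hs_inner m Y (Z * ctrans X)"
proof -
  have "hs_inner m (Y * X) Z =
      (\<Sum>i<m. \<Sum>j<m. \<Sum>k<m. cnj (Y $$ (i,k)) * cnj (X $$ (k,j)) * Z $$ (i,j))"
    unfolding hs_inner_def sum_entries
    by (intro sum.cong refl)
      (simp add: mult_mat_entry[OF Y X] sum_distrib_right cnj_sum del: index_mult_mat)
  also have "\<dots> = (\<Sum>i<m. \<Sum>k<m. \<Sum>j<m. cnj (Y $$ (i,k)) * cnj (X $$ (k,j)) * Z $$ (i,j))"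
    by (rule sum.cong[OF refl], rule sum.swap)
  also have "\<dots> = hs_inner m Y (Z * ctrans X)"
    unfolding hs_inner_def sum_entries
    by (intro sum.cong refl)
      (simp add: mult_mat_entry[OF Z ctrans_carrier[OF X]] ctrans_entry[OF X]
        sum_distrib_left mult_ac del: index_mult_mat)
  finally show ?thesis .
qed

lemma hs_inner_msum_left: "hs_inner m (msum m V f) B = (\<Sum>r\<in>V. hs_inner m (f r) B)"
proof -
  have "hs_inner m (msum m V f) B = (\<Sum>p\<in>entries m. \<Sum>r\<in>V. cnj (f r $$ p) * B $$ p)"
    unfolding hs_inner_def
    by (intro sum.cong refl) (auto simp: msum_entry cnj_sum sum_distrib_right entries_def)
  also have "\<dots> = (\<Sum>r\<in>V. \<Sum>p\<in>entries m. cnj (f r $$ p) * B $$ p)" by (rule sum.swap)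
  finally show ?thesis unfolding hs_inner_def .
qed

lemma hs_inner_msum_right: "hs_inner m A (msum m V f) = (\<Sum>r\<in>V. hs_inner m A (f r))"
proof -
  have "hs_inner m A (msum m V f) = (\<Sum>p\<in>entries m. \<Sum>r\<in>V. cnj (A $$ p) * f r $$ p)"
    unfolding hs_inner_def
    by (intro sum.cong refl) (auto simp: msum_entry sum_distrib_left entries_def)
  also have "\<dots> = (\<Sum>r\<in>V. \<Sum>p\<in>entries m. cnj (A $$ p) * f r $$ p)" by (rule sum.swap)
  finally show ?thesis unfolding hs_inner_def .
qed

lemma mtrace_eq_hs_inner:
  assumes P: "P \<in> carrier_mat m m" "ctrans P = P" and R: "R \<in> carrier_mat m m"
  shows "mtrace (P * R) = hs_inner m P R"
proof -
  have herm: "cnj (P $$ (a,b)) = P $$ (b,a)" if "a < m" "b < m" for a b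
    using ctrans_entry[OF P(1), of b a] P(2) that by simp
  have "dim_row (P * R) = m" using P by simp
  then have "mtrace (P * R) = (\<Sum>i<m. \<Sum>k<m. P $$ (i,k) * R $$ (k,i))"
    unfolding mtrace_def by (intro sum.cong) (simp_all add: mult_mat_entry[OF P(1) R] del: index_mult_mat)
  also have "\<dots> = (\<Sum>k<m. \<Sum>i<m. P $$ (i,k) * R $$ (k,i))" by (rule sum.swap)
  also have "\<dots> = hs_inner m P R"
    unfolding hs_inner_def sum_entries by (intro sum.cong refl) (simp add: herm)
  finally show ?thesis .
qed

section \<open>Pinching maps\<close>

definition proj_family :: "nat \<Rightarrow> real set \<Rightarrow> (real \<Rightarrow> complex mat) \<Rightarrow> bool" where
  "proj_family m V P \<longleftrightarrow> finite V \<and>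
     (\<forall>r\<in>V. P r \<in> carrier_mat m m \<and> ctrans (P r) = P r \<and> P r * P r = P r) \<and>
     (\<forall>r\<in>V. \<forall>s\<in>V. r \<noteq> s \<longrightarrow> P r * P s = 0\<^sub>m m m)"

definition pinching :: "nat \<Rightarrow> real set \<Rightarrow> (real \<Rightarrow> complex mat) \<Rightarrow> complex mat \<Rightarrow> complex mat" where
  "pinching m V P B = msum m V (\<lambda>r. P r * B * P r)"

lemma spectral_decomp_proj_family: "spectral_decomp m B V P \<Longrightarrow> proj_family m V P"
  unfolding spectral_decomp_def proj_family_def orth_projector_def by blast

lemma pinching_carrier [simp]: "pinching m V P B \<in> carrier_mat m m"
  by (simp add: pinching_def)

lemma pinching_dims [simp]: "dim_row (pinching m V P B) = m" "dim_col (pinching m V P B) = m"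
  by (simp_all add: pinching_def)

lemma mult_msum_left:
  assumes X: "X \<in> carrier_mat m m" and f: "\<And>r. r \<in> V \<Longrightarrow> f r \<in> carrier_mat m m"
  shows "X * msum m V f = msum m V (\<lambda>r. X * f r)"
proof (rule eq_matI)
  fix i j assume "i < dim_row (msum m V (\<lambda>r. X * f r))" "j < dim_col (msum m V (\<lambda>r. X * f r))"
  then have ij: "i < m" "j < m" by auto
  have "(X * msum m V f) $$ (i,j) = (\<Sum>l<m. \<Sum>r\<in>V. X $$ (i,l) * f r $$ (l,j))"
    using ij by (simp add: mult_mat_entry[OF X msum_carrier] msum_entry sum_distrib_left
        del: index_mult_mat)
  also have "\<dots> = (\<Sum>r\<in>V. \<Sum>l<m. X $$ (i,l) * f r $$ (l,j))" by (rule sum.swap)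
  also have "\<dots> = msum m V (\<lambda>r. X * f r) $$ (i,j)"
    using ij by (simp add: msum_entry mult_mat_entry[OF X f] del: index_mult_mat)
  finally show "(X * msum m V f) $$ (i,j) = msum m V (\<lambda>r. X * f r) $$ (i,j)" .
qed (use X in auto)

lemma mult_msum_right:
  assumes X: "X \<in> carrier_mat m m" and f: "\<And>r. r \<in> V \<Longrightarrow> f r \<in> carrier_mat m m"
  shows "msum m V f * X = msum m V (\<lambda>r. f r * X)"
proof (rule eq_matI)
  fix i j assume "i < dim_row (msum m V (\<lambda>r. f r * X))" "j < dim_col (msum m V (\<lambda>r. f r * X))"
  then have ij: "i < m" "j < m" by auto
  have "(msum m V f * X) $$ (i,j) = (\<Sum>l<m. \<Sum>r\<in>V. f r $$ (i,l) * X $$ (l,j))"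
    using ij by (simp add: mult_mat_entry[OF msum_carrier X] msum_entry sum_distrib_right
        del: index_mult_mat)
  also have "\<dots> = (\<Sum>r\<in>V. \<Sum>l<m. f r $$ (i,l) * X $$ (l,j))" by (rule sum.swap)
  also have "\<dots> = msum m V (\<lambda>r. f r * X) $$ (i,j)"
    using ij by (simp add: msum_entry mult_mat_entry[OF f X] del: index_mult_mat)
  finally show "(msum m V f * X) $$ (i,j) = msum m V (\<lambda>r. f r * X) $$ (i,j)" .
qed (use X in auto)

lemma hs_inner_sandwich:
  assumes P: "P \<in> carrier_mat m m" "ctrans P = P"
    and A: "A \<in> carrier_mat m m" and B: "B \<in> carrier_mat m m"
  shows "hs_inner m (P * A * P) B = hs_inner m A (P * B * P)"
proof -
  have "hs_inner m (P * A * P) B = hs_inner m (P * A) (B * P)"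
    using hs_inner_mult_right[OF P(1) _ B, of "P * A"] P A by simp
  also have "\<dots> = hs_inner m A (P * (B * P))"
    using hs_inner_mult_left[OF P(1) A, of "B * P"] P B by simp
  also have "P * (B * P) = P * B * P" using P B by simp
  finally show ?thesis .
qed

lemma pinching_self_adjoint:
  assumes "proj_family m V P" "A \<in> carrier_mat m m" "B \<in> carrier_mat m m"
  shows "hs_inner m (pinching m V P A) B = hs_inner m A (pinching m V P B)"
  unfolding pinching_def hs_inner_msum_left hs_inner_msum_right
  by (rule sum.cong[OF refl], rule hs_inner_sandwich) (use assms in \<open>auto simp: proj_family_def\<close>)

lemma pinching_diff:
  assumes PV: "proj_family m V P" and B: "B \<in> carrier_mat m m" and C: "C \<in> carrier_mat m m"
  shows "pinching m V P (B - C) = pinching m V P B - pinching m V P C"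
proof (rule eq_matI)
  fix i j assume "i < dim_row (pinching m V P B - pinching m V P C)"
    "j < dim_col (pinching m V P B - pinching m V P C)"
  then have ij: "i < m" "j < m" by auto
  have "(P r * (B - C) * P r) $$ (i,j) = (P r * B * P r) $$ (i,j) - (P r * C * P r) $$ (i,j)"
    if "r \<in> V" for r
  proof -
    have Pr: "P r \<in> carrier_mat m m" using PV that by (auto simp: proj_family_def)
    have "P r * (B - C) * P r = P r * B * P r - P r * C * P r"
      using Pr B C by (simp add: mult_minus_distrib_mat minus_mult_distrib_mat[of _ m m])
    then show ?thesis using Pr B C ij by simp
  qed
  then show "pinching m V P (B - C) $$ (i,j) = (pinching m V P B - pinching m V P C) $$ (i,j)"
    using ij by (simp add: pinching_def msum_entry sum_subtractf)
qed auto

lemma pinching_idem: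
  assumes PV: "proj_family m V P" and B: "B \<in> carrier_mat m m"
  shows "pinching m V P (pinching m V P B) = pinching m V P B"
proof -
  have Pc: "\<And>r. r \<in> V \<Longrightarrow> P r \<in> carrier_mat m m"
    and Pidem: "\<And>r. r \<in> V \<Longrightarrow> P r * P r = P r"
    and Porth: "\<And>r s. r \<in> V \<Longrightarrow> s \<in> V \<Longrightarrow> r \<noteq> s \<Longrightarrow> P r * P s = 0\<^sub>m m m"
    using PV by (auto simp: proj_family_def)
  have PBP: "\<And>s. s \<in> V \<Longrightarrow> P s * B * P s \<in> carrier_mat m m"
    using Pc B by (meson mult_carrier_mat)
  have sandwich: "P r * (P s * B * P s) * P r = (if s = r then P r * B * P r else 0\<^sub>m m m)"
    if r: "r \<in> V" and s: "s \<in> V" for r s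
  proof -
    have "P r * (P s * B * P s) * P r = (P r * P s) * B * (P s * P r)"
      using Pc[OF r] Pc[OF s] B by (simp add: assoc_mult_mat[of _ m m _ m _ m])
    then show ?thesis using Pidem Porth r s Pc[OF r] B by auto
  qed
  have fixed: "P r * pinching m V P B * P r = P r * B * P r" if r: "r \<in> V" for r
  proof -
    have "P r * pinching m V P B * P r = msum m V (\<lambda>s. P r * (P s * B * P s) * P r)"
      unfolding pinching_def using mult_msum_left[OF Pc[OF r] PBP]
        mult_msum_right[OF Pc[OF r], of V "\<lambda>s. P r * (P s * B * P s)"] Pc[OF r] PBP by auto
    also have "\<dots> = P r * B * P r"
    proof (rule eq_matI)
      fix i j assume "i < dim_row (P r * B * P r)" "j < dim_col (P r * B * P r)"
      then have ij: "i < m" "j < m" using Pc[OF r] by auto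
      have "msum m V (\<lambda>s. P r * (P s * B * P s) * P r) $$ (i,j)
          = (\<Sum>s\<in>V. if s = r then (P r * B * P r) $$ (i,j) else 0)"
        using ij by (auto simp: msum_entry sandwich[OF r] intro!: sum.cong)
      also have "\<dots> = (P r * B * P r) $$ (i,j)" using PV r by (simp add: proj_family_def)
      finally show "msum m V (\<lambda>s. P r * (P s * B * P s) * P r) $$ (i,j) = (P r * B * P r) $$ (i,j)" .
    qed (use Pc[OF r] B in auto)
    finally show ?thesis .
  qed
  have "pinching m V P (pinching m V P B) = msum m V (\<lambda>r. P r * B * P r)"
    unfolding pinching_def[of m V P "pinching m V P B"] by (rule msum_cong) (rule fixed)
  then show ?thesis by (simp add: pinching_def)
qed

lemma pinching_pythagoras:
  assumes PV: "proj_family m V P" and B: "B \<in> carrier_mat m m"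
  shows "(hs_norm m B)\<^sup>2 = (hs_norm m (pinching m V P B))\<^sup>2 + (hs_norm m (pinching m V P B - B))\<^sup>2"
proof (rule hs_norm_pythagoras[OF B pinching_carrier])
  have "hs_inner m (pinching m V P B) (B - pinching m V P B)
      = hs_inner m B (pinching m V P (B - pinching m V P B))"
    by (rule pinching_self_adjoint[OF PV B]) (use B in auto)
  also have "\<dots> = 0"
    using pinching_diff[OF PV B pinching_carrier] pinching_idem[OF PV B]
      hs_inner_diff_right[OF pinching_carrier pinching_carrier] by simp
  finally show "hs_inner m (pinching m V P B) (B - pinching m V P B) = 0" .
qed

lemma hs_norm_pinching_le:
  assumes "proj_family m V P" "B \<in> carrier_mat m m"
  shows "hs_norm m (pinching m V P B) \<le> hs_norm m B"
proof -
  have "(hs_norm m (pinching m V P B))\<^sup>2 \<le> (hs_norm m B)\<^sup>2"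
    using pinching_pythagoras[OF assms] by simp
  then show ?thesis by (simp add: power2_le_iff_abs_le)
qed

lemma hs_norm_pinching_diff_le:
  assumes PV: "proj_family m V P" and "B \<in> carrier_mat m m" "C \<in> carrier_mat m m"
  shows "hs_norm m (pinching m V P B - pinching m V P C) \<le> hs_norm m (B - C)"
  using hs_norm_pinching_le[OF PV minus_carrier_mat[OF assms(3), of B]]
    pinching_diff[OF PV assms(2,3)] by simp

section \<open>Words and languages\<close>

definition word_pow :: "'a list \<Rightarrow> nat \<Rightarrow> 'a list" where
  "word_pow s k = concat (replicate k s)"

lemma word_pow_0 [simp]: "word_pow s 0 = []"
  by (simp add: word_pow_def)

lemma word_pow_Suc: "word_pow s (Suc k) = s @ word_pow s k"
  by (simp add: word_pow_def)

lemma word_pow_Suc': "word_pow s (Suc k) = word_pow s k @ s"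
  by (simp add: word_pow_def replicate_append_same[symmetric])

lemma word_pow_add: "word_pow s (a + b) = word_pow s a @ word_pow s b"
  by (simp add: word_pow_def replicate_add)

lemma word_pow_mult: "word_pow s (a * n) = word_pow (word_pow s n) a"
  by (induction a) (simp_all add: word_pow_def replicate_add)

lemma word_pow_in_lists: "s \<in> lists S \<Longrightarrow> word_pow s k \<in> lists S"
  by (induction k) (auto simp: word_pow_Suc)

lemma rev_in_lists_iff [simp]: "rev xs \<in> lists A \<longleftrightarrow> xs \<in> lists A"
  by (auto simp: in_lists_conv_set)

lemma rev_word_pow: "rev (word_pow s k) = word_pow (rev s) k"
  by (induction k) (simp, metis rev_append word_pow_Suc word_pow_Suc')

definition syn_equiv :: "'a set \<Rightarrow> 'a list set \<Rightarrow> 'a list \<Rightarrow> 'a list \<Rightarrow> bool" where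
  "syn_equiv \<Sigma> L x y \<longleftrightarrow> (\<forall>u\<in>lists \<Sigma>. \<forall>v\<in>lists \<Sigma>. u @ x @ v \<in> L \<longleftrightarrow> u @ y @ v \<in> L)"

lemma syn_equiv_refl: "syn_equiv \<Sigma> L x x"
  by (simp add: syn_equiv_def)

lemma syn_equiv_sym: "syn_equiv \<Sigma> L x y \<Longrightarrow> syn_equiv \<Sigma> L y x"
  by (simp add: syn_equiv_def)

lemma syn_equiv_trans: "syn_equiv \<Sigma> L x y \<Longrightarrow> syn_equiv \<Sigma> L y z \<Longrightarrow> syn_equiv \<Sigma> L x z"
  by (simp add: syn_equiv_def)

lemma syn_equiv_context:
  assumes "syn_equiv \<Sigma> L x y" "u \<in> lists \<Sigma>" "v \<in> lists \<Sigma>"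
  shows "syn_equiv \<Sigma> L (u @ x @ v) (u @ y @ v)"
  unfolding syn_equiv_def
proof (intro ballI)
  fix \<alpha> \<beta> assume "\<alpha> \<in> lists \<Sigma>" "\<beta> \<in> lists \<Sigma>"
  then have "\<alpha> @ u \<in> lists \<Sigma>" "v @ \<beta> \<in> lists \<Sigma>" using assms(2,3) by auto
  then have "(\<alpha> @ u) @ x @ (v @ \<beta>) \<in> L \<longleftrightarrow> (\<alpha> @ u) @ y @ (v @ \<beta>) \<in> L"
    using assms(1) unfolding syn_equiv_def by blast
  then show "\<alpha> @ (u @ x @ v) @ \<beta> \<in> L \<longleftrightarrow> \<alpha> @ (u @ y @ v) @ \<beta> \<in> L" by simp
qed

lemma syn_phi_eq_iff:
  assumes "x \<in> lists \<Sigma>" "y \<in> lists \<Sigma>"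
  shows "syn_phi \<Sigma> L x = syn_phi \<Sigma> L y \<longleftrightarrow> syn_equiv \<Sigma> L x y"
proof -
  have "equiv (lists \<Sigma>) (syn_cong \<Sigma> L)"
    by (rule equivI) (auto simp: syn_cong_def refl_on_def sym_def trans_def)
  moreover have "(x, y) \<in> syn_cong \<Sigma> L \<longleftrightarrow> syn_equiv \<Sigma> L x y"
    using assms by (auto simp: syn_cong_def syn_equiv_def)
  ultimately show ?thesis
    unfolding syn_phi_def using assms by (simp add: equiv_class_eq_iff)
qed

definition right_class :: "'a set \<Rightarrow> 'a list set \<Rightarrow> 'a list \<Rightarrow> 'a list set" where
  "right_class \<Sigma> L x = {y \<in> lists \<Sigma>. \<forall>z\<in>lists \<Sigma>. x @ z \<in> L \<longleftrightarrow> y @ z \<in> L}"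

lemma right_class_eq_iff:
  assumes "x \<in> lists \<Sigma>" "y \<in> lists \<Sigma>"
  shows "right_class \<Sigma> L x = right_class \<Sigma> L y \<longleftrightarrow> (\<forall>z\<in>lists \<Sigma>. x @ z \<in> L \<longleftrightarrow> y @ z \<in> L)"
proof
  assume "right_class \<Sigma> L x = right_class \<Sigma> L y"
  moreover have "y \<in> right_class \<Sigma> L y" using assms by (simp add: right_class_def)
  ultimately have "y \<in> right_class \<Sigma> L x" by simp
  then show "\<forall>z\<in>lists \<Sigma>. x @ z \<in> L \<longleftrightarrow> y @ z \<in> L" by (simp add: right_class_def)
qed (auto simp: right_class_def)

lemma right_class_append:
  assumes "x \<in> lists \<Sigma>" "y \<in> lists \<Sigma>" "w \<in> lists \<Sigma>"
    and "right_class \<Sigma> L x = right_class \<Sigma> L y"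
  shows "right_class \<Sigma> L (x @ w) = right_class \<Sigma> L (y @ w)"
  using assms by (simp add: right_class_eq_iff)

lemma regular_lang_if_finite_invariant:
  fixes f :: "'a list \<Rightarrow> nat"
  assumes L: "L \<subseteq> lists \<Sigma>" and fin: "finite (f ` lists \<Sigma>)"
    and snoc: "\<And>x y a. x \<in> lists \<Sigma> \<Longrightarrow> y \<in> lists \<Sigma> \<Longrightarrow> a \<in> \<Sigma> \<Longrightarrow> f x = f y \<Longrightarrow>
      f (x @ [a]) = f (y @ [a])"
    and saturated: "\<And>x y. x \<in> L \<Longrightarrow> y \<in> lists \<Sigma> \<Longrightarrow> f x = f y \<Longrightarrow> y \<in> L"
  shows "regular_lang \<Sigma> L"
proof -
  define \<delta> where "\<delta> q a = f (inv_into (lists \<Sigma>) f q @ [a])" for q a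
  have \<delta>: "\<delta> (f x) a = f (x @ [a])" if "x \<in> lists \<Sigma>" "a \<in> \<Sigma>" for x a
  proof -
    let ?x' = "inv_into (lists \<Sigma>) f (f x)"
    have "?x' \<in> lists \<Sigma>" "f ?x' = f x"
      using inv_into_into[of "f x" f "lists \<Sigma>"] f_inv_into_f[of "f x" f "lists \<Sigma>"] that by auto
    then show ?thesis unfolding \<delta>_def using snoc[of ?x' x a] that by simp
  qed
  have run: "foldl \<delta> (f []) w = f w" if "w \<in> lists \<Sigma>" for w
    using that by (induction w rule: rev_induct) (auto simp: \<delta>)
  show ?thesis
    unfolding regular_lang_def
  proof (intro exI conjI)
    show "finite (f ` lists \<Sigma>)" "f [] \<in> f ` lists \<Sigma>" "f ` L \<subseteq> f ` lists \<Sigma>"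
      using fin L by auto
    show "\<forall>q\<in>f ` lists \<Sigma>. \<forall>a\<in>\<Sigma>. \<delta> q a \<in> f ` lists \<Sigma>" by (auto simp: \<delta>)
    show "L = {w \<in> lists \<Sigma>. foldl \<delta> (f []) w \<in> f ` L}"
    proof (intro equalityI subsetI)
      fix w assume w: "w \<in> L"
      then have "w \<in> lists \<Sigma>" using L by blast
      then show "w \<in> {w \<in> lists \<Sigma>. foldl \<delta> (f []) w \<in> f ` L}" using w run by simp
    next
      fix w assume "w \<in> {w \<in> lists \<Sigma>. foldl \<delta> (f []) w \<in> f ` L}"
      then have w: "w \<in> lists \<Sigma>" and "foldl \<delta> (f []) w \<in> f ` L" by auto
      then obtain x where "x \<in> L" "f x = f w" using run[OF w] by auto
      then show "w \<in> L" using saturated w by blast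
    qed
  qed
qed

lemma regular_lang_if_finite_right_classes:
  assumes L: "L \<subseteq> lists \<Sigma>" and fin: "finite (right_class \<Sigma> L ` lists \<Sigma>)"
  shows "regular_lang \<Sigma> L"
proof -
  obtain h :: "'a list set \<Rightarrow> nat" where h: "inj_on h (right_class \<Sigma> L ` lists \<Sigma>)"
    using finite_imp_inj_to_nat_seg[OF fin] by blast
  have f_eq: "h (right_class \<Sigma> L x) = h (right_class \<Sigma> L y) \<longleftrightarrow> right_class \<Sigma> L x = right_class \<Sigma> L y"
    if "x \<in> lists \<Sigma>" "y \<in> lists \<Sigma>" for x y
    using inj_on_eq_iff[OF h] that by blast
  show ?thesis
  proof (rule regular_lang_if_finite_invariant[OF L, where f = "\<lambda>x. h (right_class \<Sigma> L x)"])
    show "finite ((\<lambda>x. h (right_class \<Sigma> L x)) ` lists \<Sigma>)"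
      using finite_imageI[OF fin, of h] by (simp add: image_image)
    show "h (right_class \<Sigma> L (x @ [a])) = h (right_class \<Sigma> L (y @ [a]))"
      if "x \<in> lists \<Sigma>" "y \<in> lists \<Sigma>" "a \<in> \<Sigma>" "h (right_class \<Sigma> L x) = h (right_class \<Sigma> L y)" for x y a
      using that f_eq right_class_append[of x \<Sigma> y "[a]" L] by simp
    show "y \<in> L" if "x \<in> L" "y \<in> lists \<Sigma>" "h (right_class \<Sigma> L x) = h (right_class \<Sigma> L y)" for x y
    proof -
      have "x \<in> lists \<Sigma>" using that L by blast
      then have "\<forall>z\<in>lists \<Sigma>. x @ z \<in> L \<longleftrightarrow> y @ z \<in> L"
        using right_class_eq_iff[of x \<Sigma> y L] f_eq[of x y] that by simp
      then have "x @ [] \<in> L \<longleftrightarrow> y @ [] \<in> L" by blast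
      then show ?thesis using that by simp
    qed
  qed
qed

definition right_action :: "'a set \<Rightarrow> 'a list set \<Rightarrow> 'a list \<Rightarrow> ('a list set \<times> 'a list set) set" where
  "right_action \<Sigma> L x = {(right_class \<Sigma> L z, right_class \<Sigma> L (z @ x)) | z. z \<in> lists \<Sigma>}"

lemma syn_equiv_if_right_action_eq:
  assumes x: "x \<in> lists \<Sigma>" and y: "y \<in> lists \<Sigma>" and eq: "right_action \<Sigma> L x = right_action \<Sigma> L y"
  shows "syn_equiv \<Sigma> L x y"
  unfolding syn_equiv_def
proof (intro ballI)
  fix z \<beta> assume z: "z \<in> lists \<Sigma>" and \<beta>: "\<beta> \<in> lists \<Sigma>"
  have "(right_class \<Sigma> L z, right_class \<Sigma> L (z @ x)) \<in> right_action \<Sigma> L x"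
    using z unfolding right_action_def by blast
  then have "(right_class \<Sigma> L z, right_class \<Sigma> L (z @ x)) \<in> right_action \<Sigma> L y"
    using eq by simp
  then obtain z' where z': "z' \<in> lists \<Sigma>" "right_class \<Sigma> L z' = right_class \<Sigma> L z"
    "right_class \<Sigma> L (z' @ y) = right_class \<Sigma> L (z @ x)"
    by (auto simp: right_action_def)
  have "z' @ y \<in> lists \<Sigma>" "z @ x \<in> lists \<Sigma>" using z z'(1) x y by simp_all
  then have "(z @ x) @ \<beta> \<in> L \<longleftrightarrow> (z' @ y) @ \<beta> \<in> L"
    using right_class_eq_iff[of "z @ x" \<Sigma> "z' @ y" L] z'(3) \<beta> by simp
  also have "\<dots> \<longleftrightarrow> z @ (y @ \<beta>) \<in> L"
    using right_class_eq_iff[of z' \<Sigma> z L] z z'(1,2) y \<beta> by simp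
  finally show "z @ x @ \<beta> \<in> L \<longleftrightarrow> z @ y @ \<beta> \<in> L" by simp
qed

lemma syn_equiv_word_pow_shift:
  assumes w: "w \<in> lists \<Sigma>" and base: "syn_equiv \<Sigma> L (word_pow w i) (word_pow w (i + p))"
    and iq: "i \<le> q"
  shows "syn_equiv \<Sigma> L (word_pow w q) (word_pow w (q + c * p))"
proof (induction c)
  case (Suc c)
  have "syn_equiv \<Sigma> L (word_pow w (q - i) @ word_pow w i @ word_pow w (c * p))
      (word_pow w (q - i) @ word_pow w (i + p) @ word_pow w (c * p))"
    by (rule syn_equiv_context[OF base word_pow_in_lists[OF w] word_pow_in_lists[OF w]])
  moreover have "word_pow w (q - i) @ word_pow w i @ word_pow w (c * p) = word_pow w (q + c * p)"
    and "word_pow w (q - i) @ word_pow w (i + p) @ word_pow w (c * p) = word_pow w (q + Suc c * p)"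
    using iq by (simp_all add: word_pow_add[symmetric])
  ultimately show ?case using Suc syn_equiv_trans by metis
qed (simp add: syn_equiv_refl)

lemma word_pow_syn_equiv_periodic:
  assumes fin: "finite (right_class \<Sigma> L ` lists \<Sigma>)" and w: "w \<in> lists \<Sigma>"
  shows "\<exists>n\<ge>1. \<forall>a\<ge>1. syn_equiv \<Sigma> L (word_pow w (a * n)) (word_pow w n)"
proof -
  define RS where "RS = right_class \<Sigma> L ` lists \<Sigma>"
  define T where "T k = right_action \<Sigma> L (word_pow w k)" for k
  have "right_action \<Sigma> L x \<subseteq> RS \<times> RS" if x: "x \<in> lists \<Sigma>" for x
  proof
    fix c assume "c \<in> right_action \<Sigma> L x"
    then obtain z where z: "z \<in> lists \<Sigma>" "c = (right_class \<Sigma> L z, right_class \<Sigma> L (z @ x))"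
      by (auto simp: right_action_def)
    moreover have "z @ x \<in> lists \<Sigma>" using z x by simp
    ultimately show "c \<in> RS \<times> RS" unfolding RS_def by blast
  qed
  then have "T ` {1..} \<subseteq> Pow (RS \<times> RS)"
    unfolding T_def using word_pow_in_lists[OF w] by blast
  moreover have "finite (Pow (RS \<times> RS))" using fin by (simp add: RS_def)
  ultimately have "finite (T ` {1..})" by (rule finite_subset)
  then have "\<not> inj_on T {1..}" using finite_imageD infinite_Ici by blast
  then obtain i j where ij: "1 \<le> i" "i < j" "T i = T j"
    unfolding inj_on_def by (metis atLeast_iff linorder_neqE_nat)
  define p where "p = j - i"
  have "syn_equiv \<Sigma> L (word_pow w i) (word_pow w (i + p))"
    using syn_equiv_if_right_action_eq[OF word_pow_in_lists[OF w] word_pow_in_lists[OF w]] ij(3)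
    unfolding T_def p_def using ij(2) by simp
  note shift = syn_equiv_word_pow_shift[OF w this]
  show ?thesis
  proof (intro exI[of _ "i * p"] conjI allI impI)
    show "1 \<le> i * p" using ij p_def by simp
    fix a :: nat assume "a \<ge> 1"
    then have "a * (i * p) = i * p + ((a - 1) * i) * p"
      by (cases a) (simp_all add: algebra_simps)
    moreover have "i \<le> i * p" using ij p_def by simp
    ultimately show "syn_equiv \<Sigma> L (word_pow w (a * (i * p))) (word_pow w (i * p))"
      using shift[of "i * p" "(a - 1) * i"] syn_equiv_sym by metis
  qed
qed

lemma word_pow_syn_equiv_common_period:
  assumes fin: "finite (right_class \<Sigma> L ` lists \<Sigma>)" and s: "s \<in> lists \<Sigma>" and t: "t \<in> lists \<Sigma>"
  shows "\<exists>n\<ge>1. \<forall>a\<ge>1. syn_equiv \<Sigma> L (word_pow s (a * n)) (word_pow s n)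
                    \<and> syn_equiv \<Sigma> L (word_pow t (a * n)) (word_pow t n)"
proof -
  have multiple: "syn_equiv \<Sigma> L (word_pow w (a * (k * n))) (word_pow w (k * n))"
    if periodic: "\<forall>a\<ge>1. syn_equiv \<Sigma> L (word_pow w (a * n)) (word_pow w n)"
      and "a \<ge> 1" "k \<ge> 1" for w a k n
  proof -
    have "syn_equiv \<Sigma> L (word_pow w ((a * k) * n)) (word_pow w n)"
      and "syn_equiv \<Sigma> L (word_pow w (k * n)) (word_pow w n)"
      using periodic that by simp_all
    then show ?thesis by (metis syn_equiv_sym syn_equiv_trans mult.assoc)
  qed
  obtain ns where ns: "ns \<ge> 1" "\<forall>a\<ge>1. syn_equiv \<Sigma> L (word_pow s (a * ns)) (word_pow s ns)"
    using word_pow_syn_equiv_periodic[OF fin s] by blast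
  obtain nt where nt: "nt \<ge> 1" "\<forall>a\<ge>1. syn_equiv \<Sigma> L (word_pow t (a * nt)) (word_pow t nt)"
    using word_pow_syn_equiv_periodic[OF fin t] by blast
  show ?thesis
  proof (intro exI[of _ "nt * ns"] conjI allI impI)
    show "1 \<le> nt * ns" using ns nt by simp
    fix a :: nat assume "a \<ge> 1"
    then show "syn_equiv \<Sigma> L (word_pow s (a * (nt * ns))) (word_pow s (nt * ns))"
      and "syn_equiv \<Sigma> L (word_pow t (a * (nt * ns))) (word_pow t (nt * ns))"
      using multiple[OF ns(2), of a nt] multiple[OF nt(2), of a ns] ns nt by (simp_all add: mult.commute)
  qed
qed

lemma syn_equiv_word_pow_context:
  assumes x: "syn_equiv \<Sigma> L x (s @ x @ t)" and s: "s \<in> lists \<Sigma>" and t: "t \<in> lists \<Sigma>"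
  shows "syn_equiv \<Sigma> L x (word_pow s k @ x @ word_pow t k)"
proof (induction k)
  case (Suc k)
  have "syn_equiv \<Sigma> L (word_pow s k @ x @ word_pow t k) (word_pow s k @ (s @ x @ t) @ word_pow t k)"
    by (rule syn_equiv_context[OF x word_pow_in_lists[OF s] word_pow_in_lists[OF t]])
  then show ?case
    using Suc syn_equiv_trans by (fastforce simp: word_pow_Suc'[of s] word_pow_Suc[of t])
qed (simp add: syn_equiv_refl)

lemma J_trivial_synI:
  assumes mutual: "\<And>x y u v u' v'. \<lbrakk>x \<in> lists \<Sigma>; y \<in> lists \<Sigma>; u \<in> lists \<Sigma>; v \<in> lists \<Sigma>;
      u' \<in> lists \<Sigma>; v' \<in> lists \<Sigma>; syn_equiv \<Sigma> L x (u @ y @ v); syn_equiv \<Sigma> L y (u' @ x @ v')\<rbrakk>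
      \<Longrightarrow> syn_equiv \<Sigma> L x y"
  shows "J_trivial_syn \<Sigma> L"
  unfolding J_trivial_syn_def
proof (intro ballI impI)
  fix x y assume x: "x \<in> lists \<Sigma>" and y: "y \<in> lists \<Sigma>"
    and ideal: "syn_ideal \<Sigma> L x = syn_ideal \<Sigma> L y"
  have self: "syn_phi \<Sigma> L z \<in> syn_ideal \<Sigma> L z" for z
    unfolding syn_ideal_def by (rule CollectI, rule exI[of _ "[]"], rule exI[of _ "[]"]) simp
  have "syn_phi \<Sigma> L x \<in> syn_ideal \<Sigma> L y" using self[of x] ideal by simp
  then obtain u v where uv: "u \<in> lists \<Sigma>" "v \<in> lists \<Sigma>" "syn_phi \<Sigma> L x = syn_phi \<Sigma> L (u @ y @ v)"
    unfolding syn_ideal_def by blast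
  have "syn_phi \<Sigma> L y \<in> syn_ideal \<Sigma> L x" using self[of y] ideal by simp
  then obtain u' v' where uv': "u' \<in> lists \<Sigma>" "v' \<in> lists \<Sigma>" "syn_phi \<Sigma> L y = syn_phi \<Sigma> L (u' @ x @ v')"
    unfolding syn_ideal_def by blast
  have "syn_equiv \<Sigma> L x (u @ y @ v)" "syn_equiv \<Sigma> L y (u' @ x @ v')"
    using syn_phi_eq_iff[of x \<Sigma> "u @ y @ v" L] syn_phi_eq_iff[of y \<Sigma> "u' @ x @ v'" L] uv uv' x y
    by simp_all
  then have "syn_equiv \<Sigma> L x y" by (rule mutual[OF x y uv(1,2) uv'(1,2)])
  then show "syn_phi \<Sigma> L x = syn_phi \<Sigma> L y" using syn_phi_eq_iff[OF x y] by simp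
qed

lemma finite_image_if_factors_through:
  assumes "finite (g ` A)" and "\<And>x y. x \<in> A \<Longrightarrow> y \<in> A \<Longrightarrow> g x = g y \<Longrightarrow> f x = f y"
  shows "finite (f ` A)"
proof -
  have "f ` A \<subseteq> (\<lambda>v. f (inv_into A g v)) ` g ` A"
  proof
    fix y assume "y \<in> f ` A"
    then obtain x where x: "x \<in> A" "y = f x" by blast
    then have "inv_into A g (g x) \<in> A" "g (inv_into A g (g x)) = g x"
      using inv_into_into[of "g x" g A] f_inv_into_f[of "g x" g A] by auto
    then have "y = f (inv_into A g (g x))" using assms(2) x by metis
    then show "y \<in> (\<lambda>v. f (inv_into A g v)) ` g ` A" using x by blast
  qed
  then show ?thesis using assms(1) finite_subset by blast
qed

section \<open>Quantization of matrices\<close>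

definition quantize :: "real \<Rightarrow> nat \<Rightarrow> complex mat \<Rightarrow> (int \<times> int) list" where
  "quantize K m B = map (\<lambda>(i,j). (round (K * Re (B $$ (i,j))), round (K * Im (B $$ (i,j)))))
     (List.product [0..<m] [0..<m])"

lemma abs_diff_le_if_round_eq:
  fixes K a b :: real
  assumes K: "K > 0" and eq: "round (K * a) = round (K * b)"
  shows "\<bar>a - b\<bar> \<le> 1 / K"
proof -
  have "\<bar>of_int (round (K * a)) - K * a\<bar> \<le> 1/2" "\<bar>of_int (round (K * b)) - K * b\<bar> \<le> 1/2"
    by (rule of_int_round_abs_le)+
  then have "\<bar>K * a - K * b\<bar> \<le> 1" using eq by linarith
  then have "K * \<bar>a - b\<bar> \<le> 1" using K by (simp add: abs_mult right_diff_distrib[symmetric])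
  then show ?thesis using K by (simp add: le_divide_eq mult.commute)
qed

lemma abs_round_le:
  fixes K y R :: real
  assumes "K > 0" "\<bar>y\<bar> \<le> R"
  shows "\<bar>round (K * y)\<bar> \<le> \<lceil>K * R\<rceil> + 1"
proof -
  have "\<bar>K * y\<bar> \<le> K * R" using assms by (simp add: abs_mult)
  moreover have "\<bar>of_int (round (K * y)) - K * y\<bar> \<le> 1/2" by (rule of_int_round_abs_le)
  moreover have "K * R \<le> of_int \<lceil>K * R\<rceil>" by (rule le_of_int_ceiling)
  ultimately have "\<bar>real_of_int (round (K * y))\<bar> \<le> real_of_int (\<lceil>K * R\<rceil> + 1)" by linarith
  then show ?thesis by linarith
qed

lemma hs_norm_diff_le_if_quantize_eq:
  assumes K: "K > 0" and B: "B \<in> carrier_mat m m" and C: "C \<in> carrier_mat m m"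
    and eq: "quantize K m B = quantize K m C"
  shows "hs_norm m (B - C) \<le> 2 * real m / K"
proof -
  have entry: "cmod ((B - C) $$ p) \<le> 2 / K" if p: "p \<in> entries m" for p
  proof -
    obtain i j where ij: "p = (i,j)" "i < m" "j < m" using p by (auto simp: entries_def)
    then have "(i,j) \<in> set (List.product [0..<m] [0..<m])" by simp
    then have "round (K * Re (B $$ (i,j))) = round (K * Re (C $$ (i,j)))"
      and "round (K * Im (B $$ (i,j))) = round (K * Im (C $$ (i,j)))"
      using eq unfolding quantize_def map_eq_conv by fastforce+
    then have "\<bar>Re ((B - C) $$ p)\<bar> \<le> 1 / K" "\<bar>Im ((B - C) $$ p)\<bar> \<le> 1 / K"
      using abs_diff_le_if_round_eq[OF K] ij B C by simp_all
    then show ?thesis using cmod_le[of "(B - C) $$ p"] by simp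
  qed
  have "hs_norm m (B - C) \<le> L2_set (\<lambda>p. 2 / K) (entries m)"
    unfolding hs_norm_def by (rule L2_set_mono) (use entry in auto)
  also have "\<dots> = 2 * real m / K" using K by (simp add: L2_set_constant entries_def)
  finally show ?thesis .
qed

lemma finite_quantize_bounded:
  assumes K: "K > 0"
  shows "finite (quantize K m ` {B \<in> carrier_mat m m. hs_norm m B \<le> R})"
proof -
  define N where "N = \<lceil>K * R\<rceil> + 1"
  have "quantize K m B \<in> {xs. set xs \<subseteq> {-N..N} \<times> {-N..N} \<and> length xs = m * m}"
    if "hs_norm m B \<le> R" for B
  proof -
    have "set (quantize K m B) \<subseteq> {-N..N} \<times> {-N..N}"
    proof
      fix z assume "z \<in> set (quantize K m B)"
      then obtain i j where ij: "i < m" "j < m"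
        and z: "z = (round (K * Re (B $$ (i,j))), round (K * Im (B $$ (i,j))))"
        unfolding quantize_def by auto
      have "\<bar>Re (B $$ (i,j))\<bar> \<le> R" "\<bar>Im (B $$ (i,j))\<bar> \<le> R"
        using entry_norm_le_hs_norm[OF ij, of B] abs_Re_le_cmod abs_Im_le_cmod \<open>hs_norm m B \<le> R\<close>
        by (meson order_trans)+
      then have "\<bar>round (K * Re (B $$ (i,j)))\<bar> \<le> N" "\<bar>round (K * Im (B $$ (i,j)))\<bar> \<le> N"
        unfolding N_def by (simp_all add: abs_round_le[OF K])
      then show "z \<in> {-N..N} \<times> {-N..N}" unfolding z by (simp add: abs_le_iff)
    qed
    then show ?thesis by (simp add: quantize_def length_product)
  qed
  then have "quantize K m ` {B \<in> carrier_mat m m. hs_norm m B \<le> R}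
      \<subseteq> {xs. set xs \<subseteq> {-N..N} \<times> {-N..N} \<and> length xs = m * m}" by blast
  moreover have "finite {xs. set xs \<subseteq> {-N..N} \<times> {-N..N} \<and> length xs = m * m}"
    by (rule finite_lists_length_eq) simp
  ultimately show ?thesis by (rule finite_subset)
qed

lemma mult_less_if_le_frac:
  fixes d a b c :: real
  assumes "d > 0" "a \<ge> 0" "b \<ge> 0" "c \<le> a * (d / ((a + 1) * (b + 1)))"
  shows "b * c < d"
proof -
  have "b * c \<le> b * (a * (d / ((a + 1) * (b + 1))))" by (rule mult_left_mono[OF assms(4,3)])
  also have "a * b < (a + 1) * (b + 1)" using assms by (simp add: algebra_simps)
  then have "a * b * d < (a + 1) * (b + 1) * d" using assms by simp
  then have "b * (a * (d / ((a + 1) * (b + 1)))) < d" using assms by (simp add: divide_less_eq mult_ac)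
  finally show ?thesis .
qed

lemma mult_sqrt_div_ceiling_le:
  fixes R c e :: real
  assumes R: "R \<ge> 0" and e: "e > 0"
  shows "c * sqrt (R / (nat \<lceil>R * c\<^sup>2 / e\<^sup>2\<rceil> + 1)) \<le> e"
proof -
  define K :: nat where "K = nat \<lceil>R * c\<^sup>2 / e\<^sup>2\<rceil> + 1"
  have "R * c\<^sup>2 / e\<^sup>2 \<le> K" unfolding K_def by linarith
  then have "R * c\<^sup>2 \<le> K * e\<^sup>2" using e by (simp add: divide_le_eq)
  then have "R / K * c\<^sup>2 \<le> e\<^sup>2" by (simp add: K_def divide_le_eq mult.commute mult.left_commute)
  then have "(c * sqrt (R / K))\<^sup>2 \<le> e\<^sup>2" using R by (simp add: power_mult_distrib mult.commute)
  then show ?thesis using e by (simp add: power2_le_iff_abs_le K_def)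
qed

lemma exists_small_decrement:
  fixes f :: "nat \<Rightarrow> real"
  assumes K: "K \<ge> 1" and f1: "f 1 \<le> R" and nonneg: "\<And>k. f k \<ge> 0"
  shows "\<exists>k\<in>{1..K}. f k - f (Suc k) \<le> R / K"
proof (rule ccontr)
  assume "\<not> ?thesis"
  then have "(\<Sum>k=1..K. R / K) < (\<Sum>k=1..K. f k - f (Suc k))"
    using K by (intro sum_strict_mono) force+
  also have "\<dots> = f 1 - f (Suc K)" using sum_Suc_diff[of 1 K "\<lambda>k. - f k"] by simp
  finally show False using K f1 nonneg[of "Suc K"] by simp
qed

section \<open>Dynamics of a MON-1qfa\<close>

locale mon1qfa_valid =
  fixes \<Sigma> :: "'a set" and A :: "'a mon1qfa"
  assumes valid: "valid_mon1qfa \<Sigma> A"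
begin

abbreviation M :: nat where "M \<equiv> dim A"

definition step :: "'a \<Rightarrow> complex mat \<Rightarrow> complex mat" where
  "step c = measure_step A (Some c)"

definition run :: "complex mat \<Rightarrow> 'a list \<Rightarrow> complex mat" where
  "run \<sigma> w = foldl (\<lambda>\<rho> c. step c \<rho>) \<sigma> w"

definition acc_op :: "complex mat" where
  "acc_op = msum M (acc A) (proj A None)"

lemma acc_op_carrier [simp]: "acc_op \<in> carrier_mat M M"
  by (simp add: acc_op_def)

lemma proj_family_letter: "c \<in> \<Sigma> \<Longrightarrow> proj_family M (spec A (Some c)) (proj A (Some c))"
  using valid unfolding valid_mon1qfa_def by (auto intro: spectral_decomp_proj_family)

lemma proj_family_end: "proj_family M (spec A None) (proj A None)"
  using valid unfolding valid_mon1qfa_def by (auto intro: spectral_decomp_proj_family)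

lemma step_eq_pinching: "step c B = pinching M (spec A (Some c)) (proj A (Some c)) B"
  by (simp add: step_def measure_step_def pinching_def)

lemma step_carrier [simp]: "step c B \<in> carrier_mat M M"
  by (simp add: step_eq_pinching)

lemma run_Nil [simp]: "run \<sigma> [] = \<sigma>"
  by (simp add: run_def)

lemma run_Cons [simp]: "run \<sigma> (c # w) = run (step c \<sigma>) w"
  by (simp add: run_def)

lemma run_append: "run \<sigma> (u @ v) = run (run \<sigma> u) v"
  by (simp add: run_def)

lemma run_snoc: "run \<sigma> (u @ [c]) = step c (run \<sigma> u)"
  by (simp add: run_def)

lemma run_carrier: "\<sigma> \<in> carrier_mat M M \<Longrightarrow> run \<sigma> w \<in> carrier_mat M M"
  by (induction w arbitrary: \<sigma>) auto

lemma step_idem: "c \<in> \<Sigma> \<Longrightarrow> B \<in> carrier_mat M M \<Longrightarrow> step c (step c B) = step c B"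
  unfolding step_eq_pinching by (rule pinching_idem[OF proj_family_letter])

lemma step_pythagoras: "c \<in> \<Sigma> \<Longrightarrow> B \<in> carrier_mat M M \<Longrightarrow>
    (hs_norm M B)\<^sup>2 = (hs_norm M (step c B))\<^sup>2 + (hs_norm M (step c B - B))\<^sup>2"
  unfolding step_eq_pinching by (rule pinching_pythagoras[OF proj_family_letter])

lemma hs_norm_run_le: "w \<in> lists \<Sigma> \<Longrightarrow> \<sigma> \<in> carrier_mat M M \<Longrightarrow> hs_norm M (run \<sigma> w) \<le> hs_norm M \<sigma>"
proof (induction w arbitrary: \<sigma>)
  case (Cons c w)
  then have "hs_norm M (run (step c \<sigma>) w) \<le> hs_norm M (step c \<sigma>)" by auto
  also have "\<dots> \<le> hs_norm M \<sigma>"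
    using Cons.prems hs_norm_pinching_le[OF proj_family_letter] by (simp add: step_eq_pinching)
  finally show ?case by simp
qed simp

lemma hs_norm_run_diff_le: "w \<in> lists \<Sigma> \<Longrightarrow> \<sigma> \<in> carrier_mat M M \<Longrightarrow> \<tau> \<in> carrier_mat M M \<Longrightarrow>
    hs_norm M (run \<sigma> w - run \<tau> w) \<le> hs_norm M (\<sigma> - \<tau>)"
proof (induction w arbitrary: \<sigma> \<tau>)
  case (Cons c w)
  then have "hs_norm M (run (step c \<sigma>) w - run (step c \<tau>) w) \<le> hs_norm M (step c \<sigma> - step c \<tau>)"
    by auto
  also have "\<dots> \<le> hs_norm M (\<sigma> - \<tau>)"
    using Cons.prems hs_norm_pinching_diff_le[OF proj_family_letter] by (simp add: step_eq_pinching)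
  finally show ?case by simp
qed simp

text \<open>Since every step is self-adjoint, the run on the state can be moved to the observable,
  where it is performed backwards.\<close>

lemma hs_inner_run: "w \<in> lists \<Sigma> \<Longrightarrow> W \<in> carrier_mat M M \<Longrightarrow> \<sigma> \<in> carrier_mat M M \<Longrightarrow>
    hs_inner M W (run \<sigma> w) = hs_inner M (run W (rev w)) \<sigma>"
proof (induction w arbitrary: \<sigma>)
  case (Cons c w)
  then have "hs_inner M W (run \<sigma> (c # w)) = hs_inner M (run W (rev w)) (step c \<sigma>)" by auto
  also have "\<dots> = hs_inner M (step c (run W (rev w))) \<sigma>"
    using pinching_self_adjoint[OF proj_family_letter] Cons.prems run_carrier
    by (simp add: step_eq_pinching)
  finally show ?case by (simp add: run_snoc)
qed simp

lemma rho0_carrier: "rho0 A \<in> carrier_mat M M"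
proof -
  have "init A \<in> carrier_mat 1 M" using valid by (simp add: valid_mon1qfa_def)
  then show ?thesis unfolding rho0_def by (meson ctrans_carrier mult_carrier_mat)
qed

lemma acc_prob_eq_hs_inner: "acc_prob A x = Re (hs_inner M acc_op (run (rho0 A) x))"
proof -
  have \<rho>: "run (rho0 A) x \<in> carrier_mat M M" using run_carrier rho0_carrier by simp
  have "acc_prob A x = (\<Sum>r\<in>acc A. Re (hs_inner M (proj A None r) (run (rho0 A) x)))"
    unfolding acc_prob_def
  proof (rule sum.cong[OF refl])
    fix r assume "r \<in> acc A"
    then have "r \<in> spec A None" using valid by (auto simp: valid_mon1qfa_def)
    then have "proj A None r \<in> carrier_mat M M" "ctrans (proj A None r) = proj A None r"
      using proj_family_end by (auto simp: proj_family_def)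
    then show "Re (mtrace (proj A None r * rho A x)) = Re (hs_inner M (proj A None r) (run (rho0 A) x))"
      using mtrace_eq_hs_inner \<rho> by (simp add: rho_def run_def step_def)
  qed
  also have "\<dots> = Re (hs_inner M acc_op (run (rho0 A) x))"
    unfolding acc_op_def hs_inner_msum_left by simp
  finally show ?thesis .
qed

lemma acc_prob_append:
  assumes "z \<in> lists \<Sigma>"
  shows "acc_prob A (x @ z) = Re (hs_inner M (run acc_op (rev z)) (run (rho0 A) x))"
  using hs_inner_run[OF assms _ run_carrier[OF rho0_carrier], of acc_op x]
  by (simp add: acc_prob_eq_hs_inner run_append acc_op_def)

lemma hs_norm_step_move_le:
  assumes w: "w \<in> lists \<Sigma>" and \<sigma>: "\<sigma> \<in> carrier_mat M M" and dec: "w = w1 @ c # w2"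
  shows "hs_norm M (step c (run \<sigma> w1) - run \<sigma> w1)
    \<le> sqrt ((hs_norm M \<sigma>)\<^sup>2 - (hs_norm M (run \<sigma> w))\<^sup>2)"
proof -
  define \<tau> where "\<tau> = run \<sigma> w1"
  have c: "c \<in> \<Sigma>" and w1: "w1 \<in> lists \<Sigma>" and w2: "w2 \<in> lists \<Sigma>" using w dec by auto
  have \<tau>: "\<tau> \<in> carrier_mat M M" using run_carrier \<sigma> \<tau>_def by simp
  have "hs_norm M \<tau> \<le> hs_norm M \<sigma>" using hs_norm_run_le[OF w1 \<sigma>] \<tau>_def by simp
  moreover have "hs_norm M (run \<sigma> w) \<le> hs_norm M (step c \<tau>)"
    using hs_norm_run_le[OF w2 step_carrier] dec \<tau>_def by (simp add: run_append)
  ultimately have "(hs_norm M (step c \<tau> - \<tau>))\<^sup>2 \<le> (hs_norm M \<sigma>)\<^sup>2 - (hs_norm M (run \<sigma> w))\<^sup>2"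
    using step_pythagoras[OF c \<tau>] power_mono[of _ _ 2] by (smt (verit) hs_norm_nonneg)
  then show ?thesis unfolding \<tau>_def[symmetric] by (simp add: real_le_rsqrt)
qed

lemma hs_norm_run_prefix_move_le:
  assumes w: "w \<in> lists \<Sigma>" and \<sigma>: "\<sigma> \<in> carrier_mat M M" and dec: "w = w1 @ rest"
  shows "hs_norm M (run \<sigma> w1 - \<sigma>) \<le> length w1 * sqrt ((hs_norm M \<sigma>)\<^sup>2 - (hs_norm M (run \<sigma> w))\<^sup>2)"
  using dec
proof (induction w1 arbitrary: rest rule: rev_induct)
  case Nil
  then show ?case using hs_norm_diff_self[OF \<sigma>] by simp
next
  case (snoc c xs)
  define D where "D = sqrt ((hs_norm M \<sigma>)\<^sup>2 - (hs_norm M (run \<sigma> w))\<^sup>2)"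
  define \<tau> where "\<tau> = run \<sigma> xs"
  have dec': "w = xs @ c # rest" using snoc by simp
  have \<tau>: "\<tau> \<in> carrier_mat M M" using run_carrier \<sigma> \<tau>_def by simp
  have "hs_norm M (run \<sigma> (xs @ [c]) - \<sigma>) \<le> hs_norm M (step c \<tau> - \<tau>) + hs_norm M (\<tau> - \<sigma>)"
    using hs_norm_triangle[OF step_carrier \<tau> \<sigma>] by (simp add: run_snoc \<tau>_def)
  also have "\<dots> \<le> D + length xs * D"
    using hs_norm_step_move_le[OF w \<sigma> dec'] snoc.IH[OF dec'] \<tau>_def D_def by (intro add_mono) simp_all
  finally show ?case by (simp add: D_def algebra_simps)
qed

lemma hs_norm_step_move_start_le:
  assumes w: "w \<in> lists \<Sigma>" and \<sigma>: "\<sigma> \<in> carrier_mat M M" and dec: "w = w1 @ c # w2"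
  shows "hs_norm M (step c \<sigma> - \<sigma>)
    \<le> (2 * length w1 + 1) * sqrt ((hs_norm M \<sigma>)\<^sup>2 - (hs_norm M (run \<sigma> w))\<^sup>2)"
proof -
  define D where "D = sqrt ((hs_norm M \<sigma>)\<^sup>2 - (hs_norm M (run \<sigma> w))\<^sup>2)"
  define \<tau> where "\<tau> = run \<sigma> w1"
  have c: "c \<in> \<Sigma>" using w dec by auto
  have \<tau>: "\<tau> \<in> carrier_mat M M" using run_carrier \<sigma> \<tau>_def by simp
  have drift: "hs_norm M (\<sigma> - \<tau>) \<le> length w1 * D"
    using hs_norm_run_prefix_move_le[OF w \<sigma> dec] hs_norm_minus_commute[OF \<sigma> \<tau>] \<tau>_def D_def by simp
  have "hs_norm M (step c \<sigma> - \<sigma>) \<le> hs_norm M (step c \<sigma> - step c \<tau>) + hs_norm M (step c \<tau> - \<sigma>)"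
    by (rule hs_norm_triangle) (simp_all add: \<sigma>)
  moreover have "hs_norm M (step c \<tau> - \<sigma>) \<le> hs_norm M (step c \<tau> - \<tau>) + hs_norm M (\<tau> - \<sigma>)"
    by (rule hs_norm_triangle) (simp_all add: \<sigma> \<tau>)
  moreover have "hs_norm M (step c \<sigma> - step c \<tau>) \<le> hs_norm M (\<sigma> - \<tau>)"
    using hs_norm_run_diff_le[of "[c]" \<sigma> \<tau>] c \<sigma> \<tau> by simp
  moreover have "hs_norm M (step c \<tau> - \<tau>) \<le> D"
    using hs_norm_step_move_le[OF w \<sigma> dec] \<tau>_def D_def by simp
  ultimately have "hs_norm M (step c \<sigma> - \<sigma>) \<le> length w1 * D + D + length w1 * D"
    using drift hs_norm_minus_commute[OF \<sigma> \<tau>] by linarith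
  then show ?thesis by (simp add: D_def algebra_simps)
qed

lemma hs_norm_run_move_le:
  fixes e :: real
  assumes v: "v \<in> lists \<Sigma>" and \<tau>: "\<tau> \<in> carrier_mat M M"
    and moves: "\<And>c. c \<in> set v \<Longrightarrow> hs_norm M (step c \<tau> - \<tau>) \<le> e"
  shows "hs_norm M (run \<tau> v - \<tau>) \<le> length v * e"
  using v moves
proof (induction v)
  case Nil
  then show ?case using hs_norm_diff_self[OF \<tau>] by simp
next
  case (Cons c v)
  have "hs_norm M (run \<tau> (c # v) - \<tau>)
      \<le> hs_norm M (run (step c \<tau>) v - run \<tau> v) + hs_norm M (run \<tau> v - \<tau>)"
    using hs_norm_triangle[OF run_carrier[OF step_carrier] run_carrier[OF \<tau>] \<tau>] by simp
  also have "\<dots> \<le> hs_norm M (step c \<tau> - \<tau>) + length v * e"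
    using hs_norm_run_diff_le[OF _ step_carrier \<tau>, of v c] Cons by (intro add_mono) auto
  also have "\<dots> \<le> length (c # v) * e" using Cons.prems by (simp add: algebra_simps)
  finally show ?case .
qed

text \<open>The squared norms along \<open>\<sigma> s\<^sup>n, \<sigma> s\<^sup>2\<^sup>n, \<dots>\<close> decrease, so some block \<open>s\<^sup>n\<close> loses little
  squared norm, and then every letter of \<open>s\<close> almost fixes the state reached before it.\<close>

lemma exists_almost_fixed_word_pow:
  assumes s: "s \<in> lists \<Sigma>" and \<sigma>: "\<sigma> \<in> carrier_mat M M" and n: "n \<ge> 1" and e: "e > 0"
  shows "\<exists>a\<ge>1. \<forall>c\<in>set s.
    hs_norm M (step c (run \<sigma> (word_pow s (a * n))) - run \<sigma> (word_pow s (a * n))) \<le> e"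
proof -
  define S where "S = word_pow s n"
  have S: "S \<in> lists \<Sigma>" using word_pow_in_lists[OF s] S_def by simp
  define f where "f k = (hs_norm M (run \<sigma> (word_pow S k)))\<^sup>2" for k
  define R where "R = (hs_norm M \<sigma>)\<^sup>2"
  define K :: nat where "K = nat \<lceil>R * (2 * length s + 1)\<^sup>2 / e\<^sup>2\<rceil> + 1"
  have "f 1 \<le> R"
    using hs_norm_run_le[OF word_pow_in_lists[OF S] \<sigma>, of 1] unfolding f_def R_def
    by (simp add: power_mono)
  then obtain k where k: "k \<ge> 1" "f k - f (Suc k) \<le> R / K"
    using exists_small_decrement[of K f R] by (force simp: K_def f_def)
  define \<tau> where "\<tau> = run \<sigma> (word_pow S k)"
  have \<tau>: "\<tau> \<in> carrier_mat M M" using run_carrier[OF \<sigma>] \<tau>_def by simp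
  have loss: "(hs_norm M \<tau>)\<^sup>2 - (hs_norm M (run \<tau> S))\<^sup>2 \<le> R / K"
    using k(2) unfolding f_def \<tau>_def by (simp add: word_pow_Suc' run_append)
  have bound: "(2 * length s + 1) * sqrt (R / K) \<le> e"
    unfolding K_def using mult_sqrt_div_ceiling_le[OF _ e, of R] by (simp add: R_def)
  show ?thesis
  proof (intro exI[of _ k] conjI ballI)
    fix c assume "c \<in> set s"
    then obtain w1 w2 where "s = w1 @ c # w2" by (blast dest: split_list)
    moreover have "S = s @ word_pow s (n - 1)" using n S_def word_pow_Suc[of s "n - 1"] by simp
    ultimately have S_dec: "S = w1 @ c # (w2 @ word_pow s (n - 1))" and "length w1 \<le> length s" by auto
    have "hs_norm M (step c \<tau> - \<tau>)
        \<le> (2 * length w1 + 1) * sqrt ((hs_norm M \<tau>)\<^sup>2 - (hs_norm M (run \<tau> S))\<^sup>2)"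
      by (rule hs_norm_step_move_start_le[OF S \<tau> S_dec])
    also have "\<dots> \<le> (2 * length s + 1) * sqrt (R / K)"
      using \<open>length w1 \<le> length s\<close> loss hs_norm_run_le[OF S \<tau>] by (intro mult_mono) simp_all
    also have "\<dots> \<le> e" by (rule bound)
    finally show "hs_norm M (step c (run \<sigma> (word_pow s (k * n))) - run \<sigma> (word_pow s (k * n))) \<le> e"
      using \<tau>_def S_def by (simp add: word_pow_mult)
  qed (use k in simp)
qed

end

section \<open>Languages recognized with an isolated cut-point\<close>

locale mon1qfa_isolated = mon1qfa_valid +
  fixes cp :: real and L :: "'a list set" and \<delta> :: real
  assumes lang: "L \<subseteq> lists \<Sigma>"
    and recognizes: "\<And>x. x \<in> lists \<Sigma> \<Longrightarrow> x \<in> L \<longleftrightarrow> acc_prob A x > cp"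
    and isolation_pos: "\<delta> > 0"
    and isolated: "\<And>x. x \<in> lists \<Sigma> \<Longrightarrow> \<delta> \<le> \<bar>acc_prob A x - cp\<bar>"
begin

lemma mem_iff_if_acc_prob_close:
  assumes "x \<in> lists \<Sigma>" "y \<in> lists \<Sigma>" "\<bar>acc_prob A x - acc_prob A y\<bar> < \<delta>"
  shows "x \<in> L \<longleftrightarrow> y \<in> L"
  using recognizes[of x] recognizes[of y] isolated[of x] isolated[of y] assms by linarith

lemma append_mem_iff_if_states_close:
  assumes x: "x \<in> lists \<Sigma>" and y: "y \<in> lists \<Sigma>" and z: "z \<in> lists \<Sigma>"
    and close: "hs_norm M acc_op * hs_norm M (run (rho0 A) x - run (rho0 A) y) < \<delta>"
  shows "x @ z \<in> L \<longleftrightarrow> y @ z \<in> L"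
proof (rule mem_iff_if_acc_prob_close)
  define W where "W = run acc_op (rev z)"
  have "hs_norm M W \<le> hs_norm M acc_op"
    using hs_norm_run_le[of "rev z" acc_op] z unfolding W_def by simp
  then have "\<bar>acc_prob A (x @ z) - acc_prob A (y @ z)\<bar>
      \<le> hs_norm M acc_op * hs_norm M (run (rho0 A) x - run (rho0 A) y)"
    using abs_Re_hs_inner_diff_right[OF run_carrier[OF rho0_carrier] run_carrier[OF rho0_carrier], of W x y]
      acc_prob_append[OF z] W_def by (smt (verit) hs_norm_nonneg mult_right_mono)
  then show "\<bar>acc_prob A (x @ z) - acc_prob A (y @ z)\<bar> < \<delta>" using close by simp
qed (use x y z in simp_all)

lemma prepend_mem_iff_if_observables_close:
  assumes \<alpha>: "\<alpha> \<in> lists \<Sigma>" and z: "z \<in> lists \<Sigma>" and z': "z' \<in> lists \<Sigma>"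
    and close: "hs_norm M (run acc_op (rev z) - run acc_op (rev z')) * hs_norm M (rho0 A) < \<delta>"
  shows "\<alpha> @ z \<in> L \<longleftrightarrow> \<alpha> @ z' \<in> L"
proof (rule mem_iff_if_acc_prob_close)
  have W: "run acc_op (rev z) \<in> carrier_mat M M" "run acc_op (rev z') \<in> carrier_mat M M"
    by (simp_all add: run_carrier)
  have "hs_norm M (run (rho0 A) \<alpha>) \<le> hs_norm M (rho0 A)" by (rule hs_norm_run_le[OF \<alpha> rho0_carrier])
  then have "\<bar>acc_prob A (\<alpha> @ z) - acc_prob A (\<alpha> @ z')\<bar>
      \<le> hs_norm M (run acc_op (rev z) - run acc_op (rev z')) * hs_norm M (rho0 A)"
    using abs_Re_hs_inner_diff_left[OF W, of "run (rho0 A) \<alpha>"]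
      acc_prob_append[OF z] acc_prob_append[OF z'] by (smt (verit) hs_norm_nonneg mult_left_mono)
  then show "\<bar>acc_prob A (\<alpha> @ z) - acc_prob A (\<alpha> @ z')\<bar> < \<delta>" using close by simp
qed (use \<alpha> z z' in simp_all)

lemma letter_square_syn_equiv: "c \<in> \<Sigma> \<Longrightarrow> syn_equiv \<Sigma> L [c, c] [c]"
  unfolding syn_equiv_def
proof (intro ballI)
  fix \<alpha> \<beta> assume c: "c \<in> \<Sigma>" and "\<alpha> \<in> lists \<Sigma>" "\<beta> \<in> lists \<Sigma>"
  moreover have "acc_prob A (\<alpha> @ [c, c] @ \<beta>) = acc_prob A (\<alpha> @ [c] @ \<beta>)"
    using step_idem[OF c run_carrier[OF rho0_carrier]] by (simp add: acc_prob_eq_hs_inner run_append)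
  ultimately show "\<alpha> @ [c, c] @ \<beta> \<in> L \<longleftrightarrow> \<alpha> @ [c] @ \<beta> \<in> L"
    using recognizes by simp
qed

text \<open>States whose quantizations at scale \<open>K\<close> agree are close enough to lie in the same right
  class, and the reachable states are bounded, so there are only finitely many quantizations.\<close>

lemma finite_right_classes: "finite (right_class \<Sigma> L ` lists \<Sigma>)"
proof -
  define e where "e = \<delta> / ((M + 1) * (hs_norm M acc_op + 1))"
  define K where "K = 2 / e"
  have e: "e > 0" using isolation_pos unfolding e_def by (simp add: add_nonneg_pos)
  then have K: "K > 0" by (simp add: K_def)
  define q where "q x = quantize K M (run (rho0 A) x)" for x
  have "q ` lists \<Sigma> \<subseteq> quantize K M ` {B \<in> carrier_mat M M. hs_norm M B \<le> hs_norm M (rho0 A)}"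
    unfolding q_def using run_carrier[OF rho0_carrier] hs_norm_run_le[OF _ rho0_carrier] by blast
  then have "finite (q ` lists \<Sigma>)" using finite_quantize_bounded[OF K] finite_subset by blast
  moreover have "right_class \<Sigma> L x = right_class \<Sigma> L y"
    if x: "x \<in> lists \<Sigma>" and y: "y \<in> lists \<Sigma>" and eq: "q x = q y" for x y
  proof -
    have "hs_norm M (run (rho0 A) x - run (rho0 A) y) \<le> M * e"
      using hs_norm_diff_le_if_quantize_eq[OF K run_carrier[OF rho0_carrier] run_carrier[OF rho0_carrier]]
        eq e unfolding q_def K_def by simp
    then have "hs_norm M acc_op * hs_norm M (run (rho0 A) x - run (rho0 A) y) < \<delta>"
      using isolation_pos by (intro mult_less_if_le_frac) (simp_all add: e_def add.commute)
    then show ?thesis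
      using append_mem_iff_if_states_close[OF x y] right_class_eq_iff[OF x y] by blast
  qed
  ultimately show ?thesis by (rule finite_image_if_factors_through)
qed

text \<open>After a suitable power of \<open>t\<close> every letter of \<open>t\<close> hardly moves the state, so by isolation
  appending \<open>v\<close> there is invisible.\<close>

lemma syn_equiv_append_letters_right:
  assumes x: "x \<in> lists \<Sigma>" and p: "p \<in> lists \<Sigma>" and t: "t \<in> lists \<Sigma>" and n: "n \<ge> 1"
    and v: "v \<in> lists \<Sigma>" "set v \<subseteq> set t"
    and loop: "\<And>b. b \<ge> 1 \<Longrightarrow> syn_equiv \<Sigma> L x (p @ x @ word_pow t (b * n))"
  shows "syn_equiv \<Sigma> L (x @ v) x"
  unfolding syn_equiv_def
proof (intro ballI)
  fix \<alpha> \<beta> assume \<alpha>: "\<alpha> \<in> lists \<Sigma>" and \<beta>: "\<beta> \<in> lists \<Sigma>"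
  define e where "e = \<delta> / ((length v + 1) * (hs_norm M acc_op + 1))"
  have e: "e > 0" using isolation_pos unfolding e_def by (simp add: add_nonneg_pos)
  define \<sigma> where "\<sigma> = run (rho0 A) (\<alpha> @ p @ x)"
  obtain b where b: "b \<ge> 1" and fixed: "\<forall>c\<in>set t.
      hs_norm M (step c (run \<sigma> (word_pow t (b * n))) - run \<sigma> (word_pow t (b * n))) \<le> e"
    using exists_almost_fixed_word_pow[OF t run_carrier[OF rho0_carrier] n e] \<sigma>_def by blast
  define W where "W = \<alpha> @ p @ x @ word_pow t (b * n)"
  have W: "W \<in> lists \<Sigma>" using \<alpha> p x word_pow_in_lists[OF t] by (simp add: W_def)
  have "run (rho0 A) W = run \<sigma> (word_pow t (b * n))" by (simp add: W_def \<sigma>_def run_append)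
  then have moves: "hs_norm M (step c (run (rho0 A) W) - run (rho0 A) W) \<le> e" if "c \<in> set v" for c
    using fixed v(2) that by auto
  have "hs_norm M (run (run (rho0 A) W) v - run (rho0 A) W) \<le> length v * e"
    using hs_norm_run_move_le[OF v(1) run_carrier[OF rho0_carrier] moves] .
  then have "hs_norm M acc_op * hs_norm M (run (rho0 A) (W @ v) - run (rho0 A) W) < \<delta>"
    using isolation_pos by (intro mult_less_if_le_frac) (simp_all add: e_def run_append add.commute)
  then have "W @ v @ \<beta> \<in> L \<longleftrightarrow> W @ \<beta> \<in> L"
    using append_mem_iff_if_states_close[of "W @ v" W \<beta>] W v \<beta> by simp
  moreover have "\<alpha> @ x @ (v @ \<beta>) \<in> L \<longleftrightarrow> \<alpha> @ (p @ x @ word_pow t (b * n)) @ (v @ \<beta>) \<in> L"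
    and "\<alpha> @ x @ \<beta> \<in> L \<longleftrightarrow> \<alpha> @ (p @ x @ word_pow t (b * n)) @ \<beta> \<in> L"
    using loop[OF b] \<alpha> \<beta> v(1) unfolding syn_equiv_def by simp_all
  ultimately show "\<alpha> @ (x @ v) @ \<beta> \<in> L \<longleftrightarrow> \<alpha> @ x @ \<beta> \<in> L" by (simp add: W_def)
qed

text \<open>The mirror image: letters are absorbed on the left by running the observable backwards.\<close>

lemma syn_equiv_prepend_letters_left:
  assumes x: "x \<in> lists \<Sigma>" and q: "q \<in> lists \<Sigma>" and s: "s \<in> lists \<Sigma>" and n: "n \<ge> 1"
    and u: "u \<in> lists \<Sigma>" "set u \<subseteq> set s"
    and loop: "\<And>a. a \<ge> 1 \<Longrightarrow> syn_equiv \<Sigma> L x (word_pow s (a * n) @ x @ q)"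
  shows "syn_equiv \<Sigma> L (u @ x) x"
  unfolding syn_equiv_def
proof (intro ballI)
  fix \<alpha> \<beta> assume \<alpha>: "\<alpha> \<in> lists \<Sigma>" and \<beta>: "\<beta> \<in> lists \<Sigma>"
  define e where "e = \<delta> / ((length u + 1) * (hs_norm M (rho0 A) + 1))"
  have e: "e > 0" using isolation_pos unfolding e_def by (simp add: add_nonneg_pos)
  define \<sigma> where "\<sigma> = run acc_op (rev (x @ q @ \<beta>))"
  have "rev s \<in> lists \<Sigma>" "\<sigma> \<in> carrier_mat M M" using s by (simp_all add: \<sigma>_def run_carrier)
  from exists_almost_fixed_word_pow[OF this n e] obtain a where a: "a \<ge> 1" and fixed: "\<forall>c\<in>set s.
      hs_norm M (step c (run \<sigma> (word_pow (rev s) (a * n))) - run \<sigma> (word_pow (rev s) (a * n))) \<le> e"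
    by auto
  define Z where "Z = word_pow s (a * n) @ x @ q @ \<beta>"
  have Z: "Z \<in> lists \<Sigma>" using x q \<beta> word_pow_in_lists[OF s] by (simp add: Z_def)
  have "run acc_op (rev Z) = run \<sigma> (word_pow (rev s) (a * n))"
    by (simp add: Z_def \<sigma>_def run_append rev_word_pow)
  then have moves: "hs_norm M (step c (run acc_op (rev Z)) - run acc_op (rev Z)) \<le> e"
    if "c \<in> set (rev u)" for c
    using fixed u(2) that by auto
  have "hs_norm M (run (run acc_op (rev Z)) (rev u) - run acc_op (rev Z)) \<le> length (rev u) * e"
    by (rule hs_norm_run_move_le[OF _ _ moves]) (simp_all add: u(1) run_carrier)
  then have "hs_norm M (rho0 A) * hs_norm M (run acc_op (rev (u @ Z)) - run acc_op (rev Z)) < \<delta>"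
    using isolation_pos by (intro mult_less_if_le_frac) (simp_all add: e_def run_append add.commute)
  then have "\<alpha> @ u @ Z \<in> L \<longleftrightarrow> \<alpha> @ Z \<in> L"
    using prepend_mem_iff_if_observables_close[of \<alpha> "u @ Z" Z] \<alpha> u Z by (simp add: mult.commute)
  moreover have "(\<alpha> @ u) @ x @ \<beta> \<in> L \<longleftrightarrow> (\<alpha> @ u) @ (word_pow s (a * n) @ x @ q) @ \<beta> \<in> L"
    and "\<alpha> @ x @ \<beta> \<in> L \<longleftrightarrow> \<alpha> @ (word_pow s (a * n) @ x @ q) @ \<beta> \<in> L"
    using loop[OF a] \<alpha> \<beta> append_in_lists_conv[of \<alpha> u \<Sigma>] u(1) unfolding syn_equiv_def by blast+
  ultimately show "\<alpha> @ (u @ x) @ \<beta> \<in> L \<longleftrightarrow> \<alpha> @ x @ \<beta> \<in> L" by (simp add: Z_def)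
qed

text \<open>With \<open>s = u u'\<close> and \<open>t = v' v\<close> we get \<open>x \<equiv> s\<^sup>k x t\<^sup>k\<close>, and hence, along a common period \<open>n\<close>
  of \<open>s\<close> and \<open>t\<close>, \<open>x \<equiv> s\<^sup>a\<^sup>n x t\<^sup>b\<^sup>n\<close>; so \<open>u'\<close> and \<open>v'\<close> are absorbed by \<open>x\<close>.\<close>

lemma syn_equiv_if_mutual_factors:
  assumes x: "x \<in> lists \<Sigma>" and y: "y \<in> lists \<Sigma>" and u: "u \<in> lists \<Sigma>" and v: "v \<in> lists \<Sigma>"
    and u': "u' \<in> lists \<Sigma>" and v': "v' \<in> lists \<Sigma>"
    and xy: "syn_equiv \<Sigma> L x (u @ y @ v)" and yx: "syn_equiv \<Sigma> L y (u' @ x @ v')"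
  shows "syn_equiv \<Sigma> L x y"
proof -
  define s where "s = u @ u'"
  define t where "t = v' @ v"
  have s: "s \<in> lists \<Sigma>" and t: "t \<in> lists \<Sigma>" using u u' v v' by (simp_all add: s_def t_def)
  have "syn_equiv \<Sigma> L x (s @ x @ t)"
    using syn_equiv_trans[OF xy syn_equiv_context[OF yx u v]] by (simp add: s_def t_def)
  note loop = syn_equiv_word_pow_context[OF this s t]
  obtain n where n: "n \<ge> 1" and periodic: "\<forall>a\<ge>1. syn_equiv \<Sigma> L (word_pow s (a * n)) (word_pow s n)
      \<and> syn_equiv \<Sigma> L (word_pow t (a * n)) (word_pow t n)"
    using word_pow_syn_equiv_common_period[OF finite_right_classes s t] by blast
  have loop_periodic: "syn_equiv \<Sigma> L x (word_pow s (a * n) @ x @ word_pow t (b * n))"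
    if "a \<ge> 1" "b \<ge> 1" for a b
  proof -
    have "syn_equiv \<Sigma> L (word_pow s n @ x @ word_pow t n) (word_pow s (a * n) @ x @ word_pow t n)"
      using syn_equiv_context[OF syn_equiv_sym, of \<Sigma> L "word_pow s (a * n)" "word_pow s n" "[]"]
        periodic that x word_pow_in_lists[OF t] by simp
    moreover have "syn_equiv \<Sigma> L (word_pow s (a * n) @ x @ word_pow t n)
        (word_pow s (a * n) @ x @ word_pow t (b * n))"
      using syn_equiv_context[OF syn_equiv_sym,
          of \<Sigma> L "word_pow t (b * n)" "word_pow t n" "word_pow s (a * n) @ x" "[]"]
        periodic that x word_pow_in_lists[OF s] by simp
    ultimately show ?thesis using loop[of n] syn_equiv_trans by blast
  qed
  have "syn_equiv \<Sigma> L (x @ v') x"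
    by (rule syn_equiv_append_letters_right[OF x word_pow_in_lists[OF s] t n v'])
      (use loop_periodic[of 1] in \<open>simp_all add: t_def\<close>)
  moreover have "syn_equiv \<Sigma> L (u' @ x) x"
    by (rule syn_equiv_prepend_letters_left[OF x word_pow_in_lists[OF t] s n u'])
      (use loop_periodic[of _ 1] in \<open>simp_all add: s_def\<close>)
  ultimately have "syn_equiv \<Sigma> L (u' @ x @ v') x"
    using syn_equiv_context[of \<Sigma> L "x @ v'" x u' "[]"] u' syn_equiv_trans by fastforce
  then show ?thesis using yx syn_equiv_sym syn_equiv_trans by blast
qed

lemma lang_in_V_Jbar: "L \<in> V_Jbar \<Sigma>"
proof -
  have "J_trivial_syn \<Sigma> L" by (rule J_trivial_synI) (rule syn_equiv_if_mutual_factors)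
  then show ?thesis
    unfolding V_Jbar_def
    using lang regular_lang_if_finite_right_classes[OF lang finite_right_classes]
    by (auto simp: syn_phi_eq_iff letter_square_syn_equiv)
qed

end

theorem theorem4:
  fixes \<Sigma> :: "'a set"
  assumes "finite \<Sigma>"
  shows "LMO \<Sigma> \<subseteq> V_Jbar \<Sigma>"
proof
  fix L assume "L \<in> LMO \<Sigma>"
  then obtain A cp \<delta> where "L \<subseteq> lists \<Sigma>" "valid_mon1qfa \<Sigma> A" "\<delta> > 0"
    "\<forall>x\<in>lists \<Sigma>. x \<in> L \<longleftrightarrow> acc_prob A x > cp" "\<forall>x\<in>lists \<Sigma>. \<delta> \<le> \<bar>acc_prob A x - cp\<bar>"
    unfolding LMO_def recognizes_isolated_def by blast
  then interpret mon1qfa_isolated \<Sigma> A cp L \<delta>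
    by unfold_locales auto
  show "L \<in> V_Jbar \<Sigma>" by (rule lang_in_V_Jbar)
qed

end
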